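(* Let $f:(\mathbb C^n,S)\to(\mathbb C^p,0)$ be a holomorphic map-germ with $p\le n+1$ which admits a one-parameter stable unfolding $F(x,\lambda)=(f_\lambda(x),\lambda)$. Let $\phi:(\mathbb C,0)\to(\mathbb C,0)$ be a quasihomogeneous function and let $Af(x,z)=(f_{\phi(z)}(x),z)$ be the augmentation of $f$ by $F$ and $\phi$. Then $$\pi_2(i^*(\operatorname{Lift}(Af)))=\pi_2(i^*(\operatorname{Lift}(F))),$$ i.e. the set of function germs $\{\eta_{p+1}(X,0):\eta\in\operatorname{Lift}(Af)\}\subset\mathcal O_p$ equals the set $\{\eta_{p+1}(X,0):\eta\in\operatorname{Lift}(F)\}\subset\mathcal O_p$, where $\eta_{p+1}$ denotes the last component of a vector field $\eta$ on $(\mathbb C^p\times\mathbb C,0)$.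
   Context: $S\subset\mathbb C^n$ is finite. A one-parameter unfolding of $f$ is $F(x,\lambda)=(f_\lambda(x),\lambda)$ with $f_0=f$; it is stable if $\theta(F)=tF(\theta_{n+1})+wF(\theta_{p+1})$ where $tF(\xi)=dF\circ\xi$, $wF(\eta)=\eta\circ F$. For a map-germ $g$ with target $(\mathbb C^q,0)$, $\operatorname{Lift}(g)$ is the module of vector field germs $\eta$ on $(\mathbb C^q,0)$ such that $dg\circ\xi=\eta\circ g$ for some vector field germ $\xi$ on the source. A quasihomogeneous one-variable germ is of the form $\phi(z)=cz^k$. $i(X)=(X,0)$, $i^*$ is restriction of vector fields along $i$, and $\pi_2$ is projection onto the last component. *)

theory Defs
  imports "HOL-Analysis.Analysis"
begin

text \<open>Complex scalar multiplication on the (real normed) spaces C, C^n and products,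
  used to express complex-linearity of (real) Frechet derivatives.\<close>

class complex_scaled = real_normed_vector +
  fixes cscale :: "complex \<Rightarrow> 'a \<Rightarrow> 'a"

instantiation complex :: complex_scaled
begin
definition cscale_complex_def: "cscale c (z::complex) = c * z"
instance ..
end

instantiation vec :: (complex_scaled, finite) complex_scaled
begin
definition cscale_vec_def: "cscale c (x::'a^'b) = (\<chi> i. cscale c (x $ i))"
instance ..
end

instantiation prod :: (complex_scaled, complex_scaled) complex_scaled
begin
definition cscale_prod_def: "cscale c (x::'a \<times> 'b) = (cscale c (fst x), cscale c (snd x))"
instance ..
end

definition cholo_on :: "'a::complex_scaled set \<Rightarrow> ('a \<Rightarrow> 'b::complex_scaled) \<Rightarrow> bool" where
  "cholo_on U f \<longleftrightarrow> open U \<and> (\<forall>x\<in>U. \<exists>L. (f has_derivative L) (at x) \<and>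
      (\<forall>c v. L (cscale c v) = cscale c (L v)))"

definition hgerm_at :: "'a::complex_scaled set \<Rightarrow> ('a \<Rightarrow> 'b::complex_scaled) \<Rightarrow> bool" where
  "hgerm_at A f \<longleftrightarrow> (\<exists>U. open U \<and> A \<subseteq> U \<and> cholo_on U f)"

definition geq :: "'a::topological_space set \<Rightarrow> ('a \<Rightarrow> 'b) \<Rightarrow> ('a \<Rightarrow> 'b) \<Rightarrow> bool" where
  "geq A f g \<longleftrightarrow> (\<exists>U. open U \<and> A \<subseteq> U \<and> (\<forall>x\<in>U. f x = g x))"

definition germ_set_eq :: "'a::topological_space set \<Rightarrow> ('a \<Rightarrow> 'b) set \<Rightarrow> ('a \<Rightarrow> 'b) set \<Rightarrow> bool" where
  "germ_set_eq A X Y \<longleftrightarrow> (\<forall>g\<in>X. \<exists>h\<in>Y. geq A g h) \<and> (\<forall>h\<in>Y. \<exists>g\<in>X. geq A h g)"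

definition tmap :: "('a::real_normed_vector \<Rightarrow> 'b::real_normed_vector) \<Rightarrow> ('a \<Rightarrow> 'a) \<Rightarrow> 'a \<Rightarrow> 'b" where
  "tmap F \<xi> = (\<lambda>y. frechet_derivative F (at y) (\<xi> y))"

definition wmap :: "('a \<Rightarrow> 'b) \<Rightarrow> ('b \<Rightarrow> 'b) \<Rightarrow> 'a \<Rightarrow> 'b" where
  "wmap F \<eta> = \<eta> \<circ> F"

text \<open>Stability of a map-germ g:(X,A) -> (Y,0) (Mather's infinitesimal criterion, as defined
  in the paper): theta(g) = tg(theta_source) + wg(theta_target).\<close>
definition stable_germ :: "'a::complex_scaled set \<Rightarrow> ('a \<Rightarrow> 'b::complex_scaled) \<Rightarrow> bool" where
  "stable_germ A g \<longleftrightarrow> (\<forall>h. hgerm_at A h \<longrightarrow>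
     (\<exists>\<xi> \<eta>. hgerm_at A \<xi> \<and> hgerm_at {0} \<eta> \<and>
        geq A h (\<lambda>y. tmap g \<xi> y + wmap g \<eta> y)))"

definition Lift :: "'a::complex_scaled set \<Rightarrow> ('a \<Rightarrow> 'b::complex_scaled) \<Rightarrow> ('b \<Rightarrow> 'b) set" where
  "Lift A g = {\<eta>. hgerm_at {0} \<eta> \<and> (\<exists>\<xi>. hgerm_at A \<xi> \<and> geq A (tmap g \<xi>) (wmap g \<eta>))}"

definition map_germ :: "'a::complex_scaled set \<Rightarrow> ('a \<Rightarrow> 'b::complex_scaled) \<Rightarrow> bool" where
  "map_germ S f \<longleftrightarrow> hgerm_at S f \<and> (\<forall>s\<in>S. f s = 0)"

definition unf_map :: "('a \<Rightarrow> complex \<Rightarrow> 'b) \<Rightarrow> 'a \<times> complex \<Rightarrow> 'b \<times> complex" where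
  "unf_map fl = (\<lambda>(x,l). (fl x l, l))"

definition is_unfolding :: "'a::complex_scaled set \<Rightarrow> ('a \<Rightarrow> 'b::complex_scaled) \<Rightarrow> ('a \<Rightarrow> complex \<Rightarrow> 'b) \<Rightarrow> bool" where
  "is_unfolding S f fl \<longleftrightarrow> hgerm_at (S \<times> {0}) (unf_map fl) \<and> geq S (\<lambda>x. fl x 0) f"

definition aug_map :: "('a \<Rightarrow> complex \<Rightarrow> 'b) \<Rightarrow> (complex \<Rightarrow> complex) \<Rightarrow> 'a \<times> complex \<Rightarrow> 'b \<times> complex" where
  "aug_map fl \<phi> = (\<lambda>(x,z). (fl x (\<phi> z), z))"

definition pi2_istar :: "('b \<times> complex \<Rightarrow> 'b \<times> complex) \<Rightarrow> 'b \<Rightarrow> complex" where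
  "pi2_istar \<eta> = (\<lambda>X. snd (\<eta> (X, 0)))"

definition quasihom1 :: "(complex \<Rightarrow> complex) \<Rightarrow> bool" where
  "quasihom1 \<phi> \<longleftrightarrow> (\<exists>c k. c \<noteq> 0 \<and> k \<ge> 1 \<and> \<phi> = (\<lambda>z. c * z ^ k))"

end

theory Submission
  imports Defs "HOL-Complex_Analysis.Complex_Analysis"
begin

text \<open>
  Write \<open>\<Phi>(x, z) = (x, \<phi> z)\<close>, so that \<open>Af\<close> is \<open>F \<circ> \<Phi>\<close> with the last coordinate replaced by \<open>z\<close>.
  A lift \<open>\<eta>\<close> of \<open>F\<close> pulls back to the lift \<open>(\<phi>' \<cdot> \<eta>\<^sub>X \<circ> \<Phi>, \<eta>\<^sub>\<lambda> \<circ> \<Phi>)\<close> of \<open>Af\<close>, whose last component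
  on \<open>z = 0\<close> is that of \<open>\<eta>\<close> because \<open>\<phi> 0 = 0\<close>. Conversely, for \<open>\<phi> z = c z^k\<close> the map \<open>\<Phi>\<close> is a
  cyclic \<open>k\<close>-fold cover off \<open>z = 0\<close>. Averaging a lift of \<open>Af\<close> over the deck transformations
  \<open>z \<mapsto> \<omega> z\<close> produces vector fields which a Cauchy integral in \<open>\<zeta>^k\<close> exhibits as holomorphic
  functions of \<open>\<lambda> = \<phi> z\<close>; they satisfy the lift equation of \<open>F\<close> off \<open>\<lambda> = 0\<close> by linearity of \<open>dF\<close>,
  hence everywhere by continuity, and keep the last component on \<open>\<lambda> = 0\<close>.
\<close>

section \<open>Holomorphic maps between complex Euclidean spaces\<close>

class complex_euclidean_space = complex_scaled + euclidean_space +
  assumes cscale_add_left: "cscale (a + b) x = cscale a x + cscale b x"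
    and cscale_add_right: "cscale a (x + y) = cscale a x + cscale a y"
    and cscale_of_real: "cscale (of_real r) x = r *\<^sub>R x"
    and cscale_cscale: "cscale a (cscale b x) = cscale (a * b) x"
    and norm_cscale: "norm (cscale a x) = norm a * norm x"

instance complex :: complex_euclidean_space
  by standard (auto simp: cscale_complex_def algebra_simps norm_mult scaleR_conv_of_real)

instance vec :: (complex_euclidean_space, finite) complex_euclidean_space
proof
  fix a b :: complex and x y :: "'a^'b" and r :: real
  show "cscale (a + b) x = cscale a x + cscale b x"
    by (simp add: cscale_vec_def vec_eq_iff cscale_add_left)
  show "cscale a (x + y) = cscale a x + cscale a y"
    by (simp add: cscale_vec_def vec_eq_iff cscale_add_right)
  show "cscale (of_real r) x = r *\<^sub>R x"
    by (simp add: cscale_vec_def vec_eq_iff cscale_of_real)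
  show "cscale a (cscale b x) = cscale (a * b) x"
    by (simp add: cscale_vec_def vec_eq_iff cscale_cscale)
  show "norm (cscale a x) = norm a * norm x"
    by (simp add: cscale_vec_def norm_vec_def L2_set_def norm_cscale power_mult_distrib
        sum_distrib_left[symmetric] real_sqrt_mult)
qed

instance prod :: (complex_euclidean_space, complex_euclidean_space) complex_euclidean_space
proof
  fix a b :: complex and x y :: "'a \<times> 'b" and r :: real
  show "cscale (a + b) x = cscale a x + cscale b x"
    by (simp add: cscale_prod_def cscale_add_left)
  show "cscale a (x + y) = cscale a x + cscale a y"
    by (simp add: cscale_prod_def cscale_add_right)
  show "cscale (of_real r) x = r *\<^sub>R x"
    by (simp add: cscale_prod_def cscale_of_real prod_eq_iff)
  show "cscale a (cscale b x) = cscale (a * b) x"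
    by (simp add: cscale_prod_def cscale_cscale)
  show "norm (cscale a x) = norm a * norm x"
    by (simp add: cscale_prod_def norm_prod_def norm_cscale power_mult_distrib
        distrib_left[symmetric] real_sqrt_mult)
qed

lemma cscale_complex [simp]: "cscale c (z::complex) = c * z"
  by (simp add: cscale_complex_def)

lemma cscale_zero_left [simp]: "cscale 0 (v::'a::complex_euclidean_space) = 0"
  using cscale_of_real[of 0 v] by simp

lemma cscale_zero_right [simp]: "cscale a (0::'a::complex_euclidean_space) = 0"
  using cscale_add_right[of a "0::'a" 0] by simp

lemma cscale_one [simp]: "cscale 1 (v::'a::complex_euclidean_space) = v"
  using cscale_of_real[of 1 v] by simp

lemma fst_cscale: "fst (cscale c p) = cscale c (fst p)"
  by (simp add: cscale_prod_def)

lemma snd_cscale: "snd (cscale c p) = cscale c (snd p)"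
  by (simp add: cscale_prod_def)

lemma cscale_vec_nth: "cscale c v $ i = cscale c (v $ i)"
  by (simp add: cscale_vec_def)

lemma cscale_left_cancel:
  assumes "s \<noteq> 0" "cscale s u = cscale s (v::'a::complex_euclidean_space)"
  shows "u = v"
proof -
  have "cscale (1/s * s) u = cscale (1/s * s) v"
    using assms by (simp only: cscale_cscale[symmetric])
  then show ?thesis using assms by simp
qed

lemma bounded_bilinear_cscale: "bounded_bilinear (\<lambda>a (v::'a::complex_euclidean_space). cscale a v)"
proof (rule bounded_bilinear.intro)
  fix a a' :: complex and v v' :: 'a and r :: real
  show "cscale (a + a') v = cscale a v + cscale a' v" by (rule cscale_add_left)
  show "cscale a (v + v') = cscale a v + cscale a v'" by (rule cscale_add_right)
  show "cscale (r *\<^sub>R a) v = r *\<^sub>R cscale a v"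
    by (simp add: scaleR_conv_of_real cscale_of_real[symmetric] cscale_cscale)
  show "cscale a (r *\<^sub>R v) = r *\<^sub>R cscale a v"
    by (simp add: cscale_of_real[symmetric] cscale_cscale mult.commute)
  show "\<exists>K. \<forall>a (v::'a). norm (cscale a v) \<le> norm a * norm v * K"
    by (rule exI[of _ 1]) (simp add: norm_cscale)
qed

lemmas bounded_linear_cscale_left = bounded_bilinear.bounded_linear_left[OF bounded_bilinear_cscale]

lemma cholo_onI:
  assumes "open U"
    and "\<And>x. x \<in> U \<Longrightarrow> \<exists>L. (f has_derivative L) (at x) \<and> (\<forall>c v. L (cscale c v) = cscale c (L v))"
  shows "cholo_on U f"
  using assms unfolding cholo_on_def by blast

lemma cholo_on_open: "cholo_on U f \<Longrightarrow> open U"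
  by (simp add: cholo_on_def)

lemma cholo_on_subset: "cholo_on U f \<Longrightarrow> open V \<Longrightarrow> V \<subseteq> U \<Longrightarrow> cholo_on V f"
  unfolding cholo_on_def by blast

lemma
  assumes "cholo_on U f" "x \<in> U"
  shows cholo_on_has_derivative: "(f has_derivative frechet_derivative f (at x)) (at x)"
    and frechet_derivative_cscale:
      "frechet_derivative f (at x) (cscale c v) = cscale c (frechet_derivative f (at x) v)"
proof -
  obtain L where L: "(f has_derivative L) (at x)" "\<forall>c v. L (cscale c v) = cscale c (L v)"
    using assms unfolding cholo_on_def by blast
  moreover have "L = frechet_derivative f (at x)"
    using L(1) by (rule frechet_derivative_at)
  ultimately show "(f has_derivative frechet_derivative f (at x)) (at x)"
    "frechet_derivative f (at x) (cscale c v) = cscale c (frechet_derivative f (at x) v)"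
    by auto
qed

lemma cholo_on_linear_frechet_derivative:
  "cholo_on U f \<Longrightarrow> x \<in> U \<Longrightarrow> linear (frechet_derivative f (at x))"
  using cholo_on_has_derivative has_derivative_linear by blast

lemma cholo_on_imp_continuous_on: "cholo_on U f \<Longrightarrow> continuous_on U f"
  by (rule continuous_at_imp_continuous_on)
     (auto intro: has_derivative_continuous cholo_on_has_derivative)

lemma cholo_on_const: "open U \<Longrightarrow> cholo_on U (\<lambda>x. c::'b::complex_euclidean_space)"
  by (rule cholo_onI) (auto intro!: exI[of _ "\<lambda>_. 0"])

lemma cholo_on_id: "open U \<Longrightarrow> cholo_on U (\<lambda>x. x)"
  by (rule cholo_onI) (auto intro!: exI[of _ "\<lambda>h. h"])

lemma cholo_on_compose:
  assumes f: "cholo_on U f" and g: "cholo_on V g" and "\<And>x. x \<in> U \<Longrightarrow> f x \<in> V"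
  shows "cholo_on U (\<lambda>x. g (f x))"
proof (rule cholo_onI[OF cholo_on_open[OF f]])
  fix x assume "x \<in> U"
  with assms show "\<exists>L. ((\<lambda>x. g (f x)) has_derivative L) (at x) \<and> (\<forall>c v. L (cscale c v) = cscale c (L v))"
    using has_derivative_compose[OF cholo_on_has_derivative[OF f] cholo_on_has_derivative[OF g]]
    by (intro exI[of _ "\<lambda>h. frechet_derivative g (at (f x)) (frechet_derivative f (at x) h)"])
       (auto simp: o_def frechet_derivative_cscale)
qed

lemma cholo_on_Pair:
  assumes f: "cholo_on U f" and g: "cholo_on U g"
  shows "cholo_on U (\<lambda>x. (f x, g x))"
proof (rule cholo_onI[OF cholo_on_open[OF f]])
  fix x assume "x \<in> U"
  with assms show "\<exists>L. ((\<lambda>x. (f x, g x)) has_derivative L) (at x) \<and> (\<forall>c v. L (cscale c v) = cscale c (L v))"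
    using has_derivative_Pair[OF cholo_on_has_derivative[OF f] cholo_on_has_derivative[OF g]]
    by (intro exI[of _ "\<lambda>h. (frechet_derivative f (at x) h, frechet_derivative g (at x) h)"])
       (auto simp: cscale_prod_def frechet_derivative_cscale)
qed

lemma cholo_on_bounded_linear_compose:
  assumes f: "cholo_on U f" and P: "bounded_linear P" and "\<And>c v. P (cscale c v) = cscale c (P v)"
  shows "cholo_on U (\<lambda>x. P (f x))"
proof (rule cholo_onI[OF cholo_on_open[OF f]])
  fix x assume "x \<in> U"
  with assms show "\<exists>L. ((\<lambda>x. P (f x)) has_derivative L) (at x) \<and> (\<forall>c v. L (cscale c v) = cscale c (L v))"
    using bounded_linear.has_derivative[OF P cholo_on_has_derivative[OF f]]
    by (intro exI[of _ "\<lambda>h. P (frechet_derivative f (at x) h)"]) (auto simp: frechet_derivative_cscale)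
qed

lemma cholo_on_fst: "cholo_on U f \<Longrightarrow> cholo_on U (\<lambda>x. fst (f x))"
  by (rule cholo_on_bounded_linear_compose) (auto intro: bounded_linear_fst simp: fst_cscale)

lemma cholo_on_snd: "cholo_on U f \<Longrightarrow> cholo_on U (\<lambda>x. snd (f x))"
  by (rule cholo_on_bounded_linear_compose) (auto intro: bounded_linear_snd simp: snd_cscale)

lemma cholo_on_vec_nth: "cholo_on U f \<Longrightarrow> cholo_on U (\<lambda>x. f x $ i)"
  by (rule cholo_on_bounded_linear_compose) (auto simp: cscale_vec_nth)

lemma cholo_on_cscale:
  fixes a :: "'a::complex_euclidean_space \<Rightarrow> complex" and f :: "'a \<Rightarrow> 'b::complex_euclidean_space"
  assumes a: "cholo_on U a" and f: "cholo_on U f"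
  shows "cholo_on U (\<lambda>x. cscale (a x) (f x))"
proof (rule cholo_onI[OF cholo_on_open[OF f]])
  fix x assume x: "x \<in> U"
  define L where "L = frechet_derivative a (at x)"
  define M where "M = frechet_derivative f (at x)"
  have "((\<lambda>x. cscale (a x) (f x)) has_derivative (\<lambda>h. cscale (a x) (M h) + cscale (L h) (f x))) (at x)"
    unfolding L_def M_def
    by (rule bounded_bilinear.FDERIV[OF bounded_bilinear_cscale
          cholo_on_has_derivative[OF a x] cholo_on_has_derivative[OF f x]])
  moreover have "L (cscale c v) = c * L v" "M (cscale c v) = cscale c (M v)" for c v
    unfolding L_def M_def using frechet_derivative_cscale[OF a x] frechet_derivative_cscale[OF f x]
    by auto
  ultimately show "\<exists>L. ((\<lambda>x. cscale (a x) (f x)) has_derivative L) (at x) \<and> (\<forall>c v. L (cscale c v) = cscale c (L v))"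
    by (auto simp: cscale_add_right cscale_cscale mult.commute)
qed

lemma cholo_on_mult:
  fixes a b :: "'a::complex_euclidean_space \<Rightarrow> complex"
  shows "cholo_on U a \<Longrightarrow> cholo_on U b \<Longrightarrow> cholo_on U (\<lambda>x. a x * b x)"
  using cholo_on_cscale[of U a b] by simp

lemma cholo_on_holomorphic_on:
  fixes f :: "complex \<Rightarrow> complex"
  assumes "open U" "f holomorphic_on U"
  shows "cholo_on U f"
proof (rule cholo_onI[OF assms(1)])
  fix x assume "x \<in> U"
  then obtain D where "(f has_field_derivative D) (at x)"
    using assms holomorphic_on_open by metis
  then show "\<exists>L. (f has_derivative L) (at x) \<and> (\<forall>c v. L (cscale c v) = cscale c (L v))"
    by (intro exI[of _ "(*) D"]) (auto simp: has_field_derivative_def)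
qed

lemma cholo_on_vec_lambda:
  fixes f :: "'n::finite \<Rightarrow> 'a::complex_euclidean_space \<Rightarrow> 'b::complex_euclidean_space"
  assumes f: "\<And>i. cholo_on U (f i)" and U: "open U"
  shows "cholo_on U (\<lambda>x. \<chi> i. f i x)"
proof (rule cholo_onI[OF U])
  fix x assume x: "x \<in> U"
  define L where "L i = frechet_derivative (f i) (at x)" for i
  have "((\<lambda>x. \<chi> i. f i x) has_derivative (\<lambda>h. \<chi> i. L i h)) (at x within UNIV)"
  proof (subst has_derivative_componentwise_within, intro ballI)
    fix e :: "'b^'n" assume "e \<in> Basis"
    then obtain i b where e: "e = axis i b" "b \<in> Basis" by (auto simp: Basis_vec_def)
    have "((\<lambda>x. f i x \<bullet> b) has_derivative (\<lambda>h. L i h \<bullet> b)) (at x)"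
      unfolding L_def by (rule has_derivative_inner_left[OF cholo_on_has_derivative[OF f x]])
    then show "((\<lambda>x. (\<chi> i. f i x) \<bullet> e) has_derivative (\<lambda>h. (\<chi> i. L i h) \<bullet> e)) (at x within UNIV)"
      by (simp add: e inner_axis)
  qed
  then show "\<exists>L. ((\<lambda>x. \<chi> i. f i x) has_derivative L) (at x) \<and> (\<forall>c v. L (cscale c v) = cscale c (L v))"
    by (intro exI[of _ "\<lambda>h. \<chi> i. L i h"])
       (auto simp: L_def frechet_derivative_cscale[OF f x] cscale_vec_def)
qed

section \<open>Cauchy estimates\<close>

lemma line_has_derivative:
  "((\<lambda>t::complex. p + cscale t (v::'a::complex_euclidean_space)) has_derivative (\<lambda>h. cscale h v)) (at t)"
  by (auto intro!: derivative_eq_intros bounded_linear.has_derivative[OF bounded_linear_cscale_left])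

lemma cholo_on_has_field_derivative_line:
  fixes f :: "'a::complex_euclidean_space \<Rightarrow> complex"
  assumes "cholo_on U f" "p + cscale t v \<in> U"
  shows "((\<lambda>t. f (p + cscale t v)) has_field_derivative
           frechet_derivative f (at (p + cscale t v)) v) (at t)"
proof -
  have "((\<lambda>t. f (p + cscale t v)) has_derivative
      (\<lambda>h. frechet_derivative f (at (p + cscale t v)) (cscale h v))) (at t)"
    using has_derivative_compose[OF line_has_derivative cholo_on_has_derivative[OF assms]]
    by (simp add: o_def)
  then show ?thesis
    unfolding has_field_derivative_def
    by (rule has_derivative_eq_rhs) (auto simp: frechet_derivative_cscale[OF assms])
qed

lemma frechet_derivative_cauchy_integral:
  fixes f :: "'a::complex_euclidean_space \<Rightarrow> complex"
  assumes "cholo_on U f" "r > 0" "\<And>t. norm t \<le> r \<Longrightarrow> p + cscale t v \<in> U"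
  shows "((\<lambda>u. f (p + cscale u v) / u^2) has_contour_integral
           (2 * pi * \<i> * frechet_derivative f (at p) v)) (circlepath 0 r)"
proof -
  define h where "h = (\<lambda>t. f (p + cscale t v))"
  have hd: "(h has_field_derivative frechet_derivative f (at (p + cscale t v)) v) (at t)"
    if "norm t \<le> r" for t
    unfolding h_def using assms that by (intro cholo_on_has_field_derivative_line) auto
  have hol: "h holomorphic_on cball 0 r"
    unfolding holomorphic_on_def field_differentiable_def
    using hd has_field_derivative_at_within by (metis mem_cball_0)
  have "((\<lambda>u. h u / (u-0) ^ (Suc 1)) has_contour_integral
      ((2 * pi * \<i>) / (fact 1) * (deriv ^^ 1) h 0)) (circlepath 0 r)"
    by (rule Cauchy_has_contour_integral_higher_derivative_circlepath)
      (use hol assms in \<open>auto intro: holomorphic_on_imp_continuous_on holomorphic_on_subset\<close>)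
  moreover have "deriv h 0 = frechet_derivative f (at p) v"
    using hd[of 0] assms(2) by (auto intro!: DERIV_imp_deriv)
  ultimately show ?thesis by (simp add: h_def power2_eq_square)
qed

lemma norm_frechet_derivative_diff_le:
  fixes f :: "'a::complex_euclidean_space \<Rightarrow> complex"
  assumes f: "cholo_on U f" and r: "r > 0"
    and pq: "\<And>t. norm t \<le> r \<Longrightarrow> p + cscale t v \<in> U \<and> q + cscale t v \<in> U"
    and B: "\<And>u. norm u = r \<Longrightarrow> norm (f (p + cscale u v) - f (q + cscale u v)) \<le> B"
  shows "norm (frechet_derivative f (at p) v - frechet_derivative f (at q) v) \<le> B / r"
proof -
  define I where "I p = 2 * pi * \<i> * frechet_derivative f (at p) v" for p
  have "((\<lambda>u. f (p + cscale u v) / u^2 - f (q + cscale u v) / u^2) has_contour_integral (I p - I q))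
      (circlepath 0 r)"
    unfolding I_def using pq by (intro has_contour_integral_diff frechet_derivative_cauchy_integral[OF f r]) auto
  moreover have "norm (f (p + cscale u v) / u^2 - f (q + cscale u v) / u^2) \<le> B / r^2"
    if "norm (u - 0) = r" for u
  proof -
    have "norm (f (p + cscale u v) / u^2 - f (q + cscale u v) / u^2) =
        norm (f (p + cscale u v) - f (q + cscale u v)) / r^2"
      using that by (simp add: diff_divide_distrib[symmetric] norm_divide norm_power)
    also have "\<dots> \<le> B / r^2"
      using B that by (intro divide_right_mono) auto
    finally show ?thesis .
  qed
  moreover have "0 \<le> B"
  proof -
    have "norm (complex_of_real r) = r" using r by simp
    from order_trans[OF norm_ge_zero B[OF this]] show ?thesis .
  qed
  ultimately have "norm (I p - I q) \<le> B / r^2 * (2 * pi * r)"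
    using r by (intro has_contour_integral_bound_circlepath) auto
  moreover have "I p - I q = (2 * pi * \<i>) * (frechet_derivative f (at p) v - frechet_derivative f (at q) v)"
    by (simp add: I_def algebra_simps)
  then have "norm (I p - I q) = 2 * pi * norm (frechet_derivative f (at p) v - frechet_derivative f (at q) v)"
    by (simp add: norm_mult)
  moreover have "B / r^2 * (2 * pi * r) = 2 * pi * (B / r)"
    using r by (simp add: power2_eq_square)
  ultimately have "(2 * pi) * norm (frechet_derivative f (at p) v - frechet_derivative f (at q) v)
      \<le> (2 * pi) * (B / r)"
    by linarith
  then show ?thesis
    by (rule mult_left_le_imp_le) (simp add: pi_gt_zero)
qed

lemma line_in_cball:
  fixes v :: "'a::complex_euclidean_space"
  assumes "dist p p0 \<le> \<epsilon>/2" "norm t \<le> \<epsilon> / (2 * norm v)" "v \<noteq> 0"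
  shows "p + cscale t v \<in> cball p0 \<epsilon>"
proof -
  have "norm (cscale t v) \<le> \<epsilon>/2"
    using assms(2,3) by (simp add: norm_cscale field_simps mult_right_mono)
  then have "dist (p + cscale t v) p0 \<le> \<epsilon>"
    using assms(1) norm_triangle_ineq[of "p - p0" "cscale t v"]
    by (simp add: dist_norm algebra_simps)
  then show ?thesis by (simp add: dist_commute)
qed

lemma continuous_on_frechet_derivative:
  fixes f :: "'a::complex_euclidean_space \<Rightarrow> complex"
  assumes f: "cholo_on U f"
  shows "continuous_on U (\<lambda>p. frechet_derivative f (at p) v)"
proof (cases "v = 0")
  case True
  have zero: "frechet_derivative f (at p) v = 0" if "p \<in> U" for p
    using True linear_0[OF cholo_on_linear_frechet_derivative[OF f that]] by simp
  show ?thesis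
    by (rule continuous_on_eq[OF continuous_on_const]) (simp add: zero)
next
  case False
  show ?thesis
  proof (rule continuous_at_imp_continuous_on, rule ballI)
    fix p0 assume p0: "p0 \<in> U"
    obtain \<epsilon> where \<epsilon>: "\<epsilon> > 0" "cball p0 \<epsilon> \<subseteq> U"
      using open_contains_cball cholo_on_open[OF f] p0 by blast
    define r where "r = \<epsilon> / (2 * norm v)"
    have r: "r > 0" using \<epsilon> False by (simp add: r_def)
    have near: "p + cscale t v \<in> cball p0 \<epsilon>" if "dist p p0 \<le> \<epsilon>/2" "norm t \<le> r" for p t
      using that False by (intro line_in_cball) (auto simp: r_def)
    have uc: "uniformly_continuous_on (cball p0 \<epsilon>) f"
      using \<epsilon> by (intro compact_uniformly_continuous continuous_on_subset[OF cholo_on_imp_continuous_on[OF f]]) auto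
    show "continuous (at p0) (\<lambda>p. frechet_derivative f (at p) v)"
      unfolding continuous_at_eps_delta
    proof (intro allI impI)
      fix e :: real assume e: "e > 0"
      obtain d where d: "d > 0"
        "\<forall>x\<in>cball p0 \<epsilon>. \<forall>x'\<in>cball p0 \<epsilon>. dist x' x < d \<longrightarrow> dist (f x') (f x) < e * r / 2"
        using uc e r unfolding uniformly_continuous_on_def
        by (metis divide_pos_pos half_gt_zero_iff mult_pos_pos zero_less_numeral)
      have "dist (frechet_derivative f (at p) v) (frechet_derivative f (at p0) v) < e"
        if p: "dist p p0 < min d (\<epsilon>/2)" for p
      proof -
        have "norm (frechet_derivative f (at p) v - frechet_derivative f (at p0) v) \<le> (e * r / 2) / r"
        proof (rule norm_frechet_derivative_diff_le[OF f r])
          have pp0: "dist p p0 \<le> \<epsilon>/2" "dist p0 p0 \<le> \<epsilon>/2"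
            using p \<epsilon>(1) by auto
          show "p + cscale t v \<in> U \<and> p0 + cscale t v \<in> U" if "norm t \<le> r" for t
            using near[OF pp0(1) that] near[OF pp0(2) that] \<epsilon>(2) by blast
          show "norm (f (p + cscale u v) - f (p0 + cscale u v)) \<le> e * r / 2" if "norm u = r" for u
          proof -
            have "dist (p + cscale u v) (p0 + cscale u v) < d"
              using p by (simp add: dist_norm)
            then have "dist (f (p + cscale u v)) (f (p0 + cscale u v)) < e * r / 2"
              using d(2) near[OF pp0(1)] near[OF pp0(2)] that by simp
            then show ?thesis by (simp add: dist_norm)
          qed
        qed
        then show ?thesis using e r by (simp add: dist_norm)
      qed
      then show "\<exists>d>0. \<forall>p. dist p p0 < d \<longrightarrow>
          dist (frechet_derivative f (at p) v) (frechet_derivative f (at p0) v) < e"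
        using d(1) \<epsilon>(1) by (intro exI[of _ "min d (\<epsilon>/2)"]) auto
    qed
  qed
qed

lemma continuous_on_frechet_derivative_apply:
  fixes g :: "'a::complex_euclidean_space \<Rightarrow> complex"
  assumes g: "cholo_on U g" and \<xi>: "continuous_on U \<xi>"
  shows "continuous_on U (\<lambda>p. frechet_derivative g (at p) (\<xi> p))"
proof -
  have "continuous_on U (\<lambda>p. \<Sum>b\<in>Basis. (\<xi> p \<bullet> b) *\<^sub>R frechet_derivative g (at p) b)"
    by (intro continuous_intros \<xi> continuous_on_frechet_derivative[OF g])
  moreover have "frechet_derivative g (at p) (\<xi> p) = (\<Sum>b\<in>Basis. (\<xi> p \<bullet> b) *\<^sub>R frechet_derivative g (at p) b)"
    if "p \<in> U" for p
  proof -
    note lin = cholo_on_linear_frechet_derivative[OF g that]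
    have "frechet_derivative g (at p) (\<xi> p) = frechet_derivative g (at p) (\<Sum>b\<in>Basis. (\<xi> p \<bullet> b) *\<^sub>R b)"
      by (simp add: euclidean_representation)
    then show ?thesis by (simp add: linear_sum[OF lin] linear_scale[OF lin])
  qed
  ultimately show ?thesis by (metis (no_types, lifting) continuous_on_eq)
qed

lemma continuous_on_tmap:
  fixes F :: "'a::complex_euclidean_space \<Rightarrow> (complex^'p) \<times> complex"
  assumes F: "cholo_on U F" and \<xi>: "continuous_on U \<xi>"
  shows "continuous_on U (tmap F \<xi>)"
proof -
  have eq: "frechet_derivative F (at p) h =
      ((\<chi> i. frechet_derivative (\<lambda>p. fst (F p) $ i) (at p) h), frechet_derivative (\<lambda>p. snd (F p)) (at p) h)"
    if p: "p \<in> U" for p h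
  proof -
    note d = cholo_on_has_derivative[OF F p]
    have "((\<lambda>p. fst (F p) $ i) has_derivative (\<lambda>h. fst (frechet_derivative F (at p) h) $ i)) (at p)" for i
      by (rule bounded_linear.has_derivative[OF bounded_linear_vec_nth has_derivative_fst[OF d]])
    then have "frechet_derivative (\<lambda>p. fst (F p) $ i) (at p) = (\<lambda>h. fst (frechet_derivative F (at p) h) $ i)"
      for i by (metis frechet_derivative_at)
    moreover have "frechet_derivative (\<lambda>p. snd (F p)) (at p) = (\<lambda>h. snd (frechet_derivative F (at p) h))"
      by (metis frechet_derivative_at has_derivative_snd[OF d])
    ultimately show ?thesis
      by (simp add: vec_eq_iff)
  qed
  have "continuous_on U (\<lambda>p. ((\<chi> i. frechet_derivative (\<lambda>p. fst (F p) $ i) (at p) (\<xi> p)),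
      frechet_derivative (\<lambda>p. snd (F p)) (at p) (\<xi> p)))"
    by (intro continuous_intros continuous_on_frechet_derivative_apply \<xi>
        cholo_on_vec_nth cholo_on_fst cholo_on_snd F)
  then show ?thesis
    unfolding tmap_def by (rule continuous_on_eq) (simp add: eq)
qed

section \<open>Holomorphic parametric integrals\<close>

lemma cholo_on_parametric_integral:
  fixes h :: "'a::complex_euclidean_space \<Rightarrow> real \<Rightarrow> complex"
  assumes U: "open U"
    and deriv: "\<And>p t. p \<in> U \<Longrightarrow> t \<in> cbox 0 1 \<Longrightarrow> ((\<lambda>p. h p t) has_derivative D p t) (at p)"
    and linear: "\<And>p t. p \<in> U \<Longrightarrow> bounded_linear (D p t)"
    and cscale: "\<And>p t c v. p \<in> U \<Longrightarrow> D p t (cscale c v) = c * D p t v"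
    and cont: "\<And>v. continuous_on (U \<times> cbox 0 1) (\<lambda>(p, t). D p t v)"
    and int: "\<And>p. p \<in> U \<Longrightarrow> h p integrable_on cbox 0 1"
  shows "cholo_on U (\<lambda>p. integral (cbox 0 1) (h p))"
proof (rule cholo_onI[OF U])
  fix p0 assume p0U: "p0 \<in> U"
  then obtain e where e: "e > 0" "ball p0 e \<subseteq> U"
    using U open_contains_ball by blast
  define B where "B = ball p0 e"
  have cont_B: "continuous_on (B \<times> cbox 0 1) (\<lambda>(p, t). Blinfun (D p t))"
  proof (rule continuous_on_blinfun_componentwise)
    fix v :: 'a
    have "continuous_on (B \<times> cbox 0 1) (\<lambda>(p, t). D p t v)"
      using e(2) by (auto simp: B_def intro: continuous_on_subset[OF cont])
    then show "continuous_on (B \<times> cbox 0 1) (\<lambda>x. blinfun_apply (case x of (p, t) \<Rightarrow> Blinfun (D p t)) v)"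
      by (rule continuous_on_eq) (use e(2) linear in \<open>auto simp: B_def bounded_linear_Blinfun_apply\<close>)
  qed
  have p0: "p0 \<in> B" using e(1) by (simp add: B_def)
  have "((\<lambda>p. integral (cbox 0 1) (h p)) has_derivative integral (cbox 0 1) (\<lambda>t. Blinfun (D p0 t)))
      (at p0 within B)"
  proof (rule leibniz_rule[OF _ _ cont_B p0])
    show "((\<lambda>p. h p t) has_derivative blinfun_apply (Blinfun (D p t))) (at p within B)"
      if "p \<in> B" "t \<in> cbox 0 1" for p t
      using that e(2) deriv linear by (auto simp: B_def bounded_linear_Blinfun_apply has_derivative_at_withinI)
  qed (use int e(2) in \<open>auto simp: B_def\<close>)
  then have "((\<lambda>p. integral (cbox 0 1) (h p)) has_derivative integral (cbox 0 1) (\<lambda>t. Blinfun (D p0 t)))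
      (at p0)"
    using at_within_open[OF p0] by (simp add: B_def)
  moreover have "integral (cbox 0 1) (\<lambda>t. Blinfun (D p0 t)) (cscale c v) =
      cscale c (integral (cbox 0 1) (\<lambda>t. Blinfun (D p0 t)) v)" for c v
  proof -
    have "(\<lambda>t. Blinfun (D p0 t)) integrable_on cbox 0 1"
      using continuous_on_compose2[OF cont_B, of "cbox 0 1" "\<lambda>t. (p0, t)"] p0
      by (intro integrable_continuous)
         (auto simp: image_subset_iff continuous_on_Pair continuous_on_const continuous_on_id)
    moreover have "bounded_linear (D p0 t)" for t
      using linear[OF p0U] .
    ultimately have "integral (cbox 0 1) (\<lambda>t. Blinfun (D p0 t)) w = integral (cbox 0 1) (\<lambda>t. D p0 t w)" for w
      by (simp add: blinfun_apply_integral bounded_linear_Blinfun_apply)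
    then show ?thesis
      using cscale[OF p0U] by simp
  qed
  ultimately show "\<exists>L. ((\<lambda>p. integral (cbox 0 1) (h p)) has_derivative L) (at p0) \<and>
      (\<forall>c v. L (cscale c v) = cscale c (L v))"
    by blast
qed

text \<open>Holomorphic in \<open>w\<close>; at \<open>w = z^k\<close> it recovers the averages of \<open>g(y, \<cdot>)\<close> over the
  \<open>k\<close>-th roots of unity (\<open>cauchy_pow_integral_symmetrisation\<close>).\<close>

definition cauchy_pow_integral ::
    "('a \<times> complex \<Rightarrow> complex) \<Rightarrow> real \<Rightarrow> nat \<Rightarrow> nat \<Rightarrow> 'a \<times> complex \<Rightarrow> complex" where
  "cauchy_pow_integral g r k q =
     (\<lambda>(y, w). contour_integral (circlepath 0 r) (\<lambda>\<zeta>. g (y, \<zeta>) * \<zeta>^q / (\<zeta>^k - w)))"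

lemma has_derivative_cauchy_integrand:
  fixes g :: "'a::complex_euclidean_space \<times> complex \<Rightarrow> complex"
  assumes g: "cholo_on V g" "(fst p, \<zeta>) \<in> V" and den: "\<zeta>^k \<noteq> snd p"
  shows "((\<lambda>p. g (fst p, \<zeta>) * (\<zeta>^q / (\<zeta>^k - snd p) * a)) has_derivative
    (\<lambda>v. frechet_derivative g (at (fst p, \<zeta>)) (fst v, 0) * (\<zeta>^q / (\<zeta>^k - snd p) * a) +
         g (fst p, \<zeta>) * (\<zeta>^q * a / (\<zeta>^k - snd p)^2) * snd v)) (at p)"
proof -
  have "((\<lambda>p::'a \<times> complex. (fst p, \<zeta>)) has_derivative (\<lambda>v. (fst v, 0))) (at p)"
    by (auto intro!: derivative_eq_intros)
  from has_derivative_compose[OF this cholo_on_has_derivative[OF g]]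
  have "((\<lambda>p. g (fst p, \<zeta>)) has_derivative (\<lambda>v. frechet_derivative g (at (fst p, \<zeta>)) (fst v, 0))) (at p)"
    by (simp add: o_def)
  moreover have "((\<lambda>p. \<zeta>^q / (\<zeta>^k - snd p) * a) has_derivative
      (\<lambda>h. ((0 * (\<zeta>^k - snd p) - \<zeta>^q * (0 - snd h)) / ((\<zeta>^k - snd p) * (\<zeta>^k - snd p))) * a)) (at p)"
    using den by (intro has_derivative_mult_left has_derivative_divide' has_derivative_const
        has_derivative_diff has_derivative_snd has_derivative_ident) auto
  ultimately show ?thesis
    by (rule has_derivative_eq_rhs[OF has_derivative_mult]) (auto simp: power2_eq_square algebra_simps)
qed

lemma cholo_on_cauchy_pow_integral:
  fixes g :: "'a::complex_euclidean_space \<times> complex \<Rightarrow> complex"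
  assumes g: "cholo_on V g" and Y: "open Y" and r: "r > 0"
    and YV: "\<And>y \<zeta>. y \<in> Y \<Longrightarrow> norm \<zeta> \<le> r \<Longrightarrow> (y, \<zeta>) \<in> V"
  shows "cholo_on (Y \<times> ball 0 (r^k)) (cauchy_pow_integral g r k q)"
proof -
  define W where "W = Y \<times> ball (0::complex) (r^k)"
  define \<gamma> where "\<gamma> t = of_real r * exp (2 * of_real pi * \<i> * of_real t)" for t :: real
  define \<gamma>' where "\<gamma>' t = 2 * of_real pi * \<i> * \<gamma> t" for t
  define K where "K p t = \<gamma> t ^ q / (\<gamma> t ^ k - snd p) * \<gamma>' t" for p :: "'a \<times> complex" and t
  define K' where "K' p t = \<gamma> t ^ q * \<gamma>' t / (\<gamma> t ^ k - snd p)^2" for p :: "'a \<times> complex" and t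
  define G where "G p t = g (fst p, \<gamma> t)" for p :: "'a \<times> complex" and t
  define DG where "DG p t = frechet_derivative g (at (fst p, \<gamma> t))" for p :: "'a \<times> complex" and t
  define D where "D p t v = DG p t (fst v, 0) * K p t + G p t * K' p t * snd v"
    for p :: "'a \<times> complex" and t v
  have W: "open W" using Y by (simp add: W_def open_Times)
  have norm_\<gamma>: "norm (\<gamma> t) = r" for t using r by (simp add: \<gamma>_def norm_mult)
  have den: "\<gamma> t ^ k - snd p \<noteq> 0" if "p \<in> W" for p t
    using that by (auto simp: W_def norm_power norm_\<gamma>)
  have inV: "(fst p, \<gamma> t) \<in> V" if "p \<in> W" for p t
    using that by (auto simp: W_def norm_\<gamma> intro!: YV)
  have cont_\<gamma> [continuous_intros]: "continuous_on S (\<lambda>x. \<gamma> (b x))" "continuous_on S (\<lambda>x. \<gamma>' (b x))"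
    if "continuous_on S b" for S and b :: "'c::topological_space \<Rightarrow> real"
    unfolding \<gamma>'_def \<gamma>_def by (intro continuous_intros that)+
  have cont_K: "continuous_on S (\<lambda>x. K (a x) (b x))" "continuous_on S (\<lambda>x. K' (a x) (b x))"
    if "continuous_on S a" "continuous_on S b" "a ` S \<subseteq> W"
    for S and a :: "'c::topological_space \<Rightarrow> 'a \<times> complex" and b
    unfolding K_def K'_def using that
    by (intro continuous_intros, auto, metis den image_subset_iff right_minus_eq)+
  have cont_G: "continuous_on S (\<lambda>x. G (a x) (b x))" "continuous_on S (\<lambda>x. DG (a x) (b x) w)"
    if "continuous_on S a" "continuous_on S b" "a ` S \<subseteq> W"
    for S w and a :: "'c::topological_space \<Rightarrow> 'a \<times> complex" and b
    unfolding G_def DG_def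
    by (rule continuous_on_compose2[OF cholo_on_imp_continuous_on[OF g]],
        (use that in \<open>auto intro!: continuous_intros inV\<close>))
       (rule continuous_on_compose2[OF continuous_on_frechet_derivative[OF g],
          where f="\<lambda>x. (fst (a x), \<gamma> (b x))"],
        (use that in \<open>auto intro!: continuous_intros inV\<close>))
  have "cholo_on W (\<lambda>p. integral (cbox 0 1) (\<lambda>t. G p t * K p t))"
  proof (rule cholo_on_parametric_integral[OF W])
    fix p t assume p: "p \<in> W"
    show deriv: "((\<lambda>p. G p t * K p t) has_derivative D p t) (at p)"
      using has_derivative_cauchy_integrand[OF g inV[OF p], where k=k and q=q and a="\<gamma>' t"] den[OF p]
      by (simp add: D_def[abs_def] G_def[abs_def] K_def[abs_def] K'_def DG_def)
    show "bounded_linear (D p t)"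
      by (rule has_derivative_bounded_linear[OF deriv])
    have "(fst (cscale c v), 0::complex) = cscale c (fst v, 0)" for c and v :: "'a \<times> complex"
      by (simp add: cscale_prod_def)
    then show "D p t (cscale c v) = c * D p t v" for c v
      unfolding D_def DG_def using frechet_derivative_cscale[OF g inV[OF p]]
      by (simp add: snd_cscale algebra_simps)
  next
    show "continuous_on (W \<times> cbox 0 1) (\<lambda>(p, t). D p t v)" for v
      unfolding D_def split_beta by (intro continuous_intros cont_G cont_K) auto
    show "(\<lambda>t. G p t * K p t) integrable_on cbox 0 1" if "p \<in> W" for p
      using that by (intro integrable_continuous continuous_intros cont_G cont_K) auto
  qed
  moreover have "cauchy_pow_integral g r k q = (\<lambda>p. integral (cbox 0 1) (\<lambda>t. G p t * K p t))"
    unfolding cauchy_pow_integral_def split_beta contour_integral_integral vector_derivative_circlepath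
    by (simp add: circlepath G_def K_def \<gamma>_def \<gamma>'_def mult.assoc)
  ultimately show ?thesis
    by (simp add: W_def)
qed

section \<open>Averaging over roots of unity\<close>

definition unit_root :: "nat \<Rightarrow> complex" where
  "unit_root k = exp (2 * of_real pi * \<i> / of_nat k)"

lemma unit_root_pow: "unit_root k ^ j = exp (2 * of_real pi * \<i> * of_nat j / of_nat k)"
  unfolding unit_root_def by (simp add: exp_of_nat_mult[symmetric] algebra_simps)

lemma unit_root_pow_eq_1_iff: "k \<ge> 1 \<Longrightarrow> unit_root k ^ s = 1 \<longleftrightarrow> k dvd s"
  unfolding unit_root_pow by (rule complex_root_unity_eq_1)

lemma unit_root_pow_self [simp]: "k \<ge> 1 \<Longrightarrow> unit_root k ^ k = 1"
  using unit_root_pow_eq_1_iff by auto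

lemma unit_root_pow_pow_self [simp]: "k \<ge> 1 \<Longrightarrow> (unit_root k ^ j) ^ k = 1"
  by (metis power_mult mult.commute unit_root_pow_self power_one)

lemma norm_unit_root [simp]: "norm (unit_root k) = 1"
  by (simp add: unit_root_def norm_exp_eq_Re)

lemma norm_unit_root_pow [simp]: "norm (unit_root k ^ j) = 1"
  by (simp add: norm_power)

lemma sum_unit_root_powers:
  assumes "k \<ge> 1"
  shows "(\<Sum>j<k. (unit_root k ^ s) ^ j) = (if k dvd s then of_nat k else 0)"
proof (cases "k dvd s")
  case True
  then have "unit_root k ^ s = 1" using unit_root_pow_eq_1_iff assms by auto
  then show ?thesis using True by simp
next
  case False
  then have ne: "unit_root k ^ s \<noteq> 1" using unit_root_pow_eq_1_iff assms by auto
  have "(unit_root k ^ s) ^ k = 1"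
    using assms by simp
  then show ?thesis using False ne by (simp add: geometric_sum)
qed

lemma sum_unit_root_powers_reflected:
  assumes k: "k \<ge> 1" and m: "m < k" and i: "i < k"
  shows "(\<Sum>j<k. (unit_root k ^ (2*k - 1 - m - i)) ^ j) = (if i = k - 1 - m then of_nat k else 0)"
proof -
  have multiple: "s = k" if "k dvd s" "0 < s" "s < 2 * k" for s
    using that by (auto simp: dvd_def)
  have "k dvd (2*k - 1 - m - i) \<longleftrightarrow> i = k - 1 - m"
  proof
    assume "k dvd (2*k - 1 - m - i)"
    then have "2*k - 1 - m - i = k" using i m by (intro multiple) auto
    then show "i = k - 1 - m" using i m by auto
  qed (use m in auto)
  then show ?thesis using sum_unit_root_powers[OF k] by simp
qed

lemma sum_unit_root_cauchy_kernel:
  fixes \<zeta> z :: complex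
  assumes k: "k \<ge> 1" and m: "m < k" and ne: "\<zeta>^k \<noteq> z^k"
  shows "(\<Sum>j<k. (unit_root k ^ j)^(k-m) / (\<zeta> - unit_root k ^ j * z)) =
    of_nat k * \<zeta>^(k-1-m) * z^m / (\<zeta>^k - z^k)"
proof -
  define S where "S u = (\<Sum>i<k. u^(k - Suc i) * \<zeta>^i)" for u
  have inv: "1 / (\<zeta> - unit_root k ^ j * z) = S (unit_root k ^ j * z) / (\<zeta>^k - z^k)" for j
  proof -
    have "(unit_root k ^ j * z)^k = z^k" using k by (simp add: power_mult_distrib)
    then have fac: "\<zeta>^k - z^k = (\<zeta> - unit_root k ^ j * z) * S (unit_root k ^ j * z)"
      unfolding S_def using power_diff_sumr2[of \<zeta> k "unit_root k ^ j * z"] by simp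
    then have "\<zeta> - unit_root k ^ j * z \<noteq> 0" using ne by auto
    with fac ne show ?thesis by (simp add: field_simps)
  qed
  have "(\<Sum>j<k. (unit_root k ^ j)^(k-m) / (\<zeta> - unit_root k ^ j * z)) =
        (\<Sum>j<k. (unit_root k ^ j)^(k-m) * S (unit_root k ^ j * z)) / (\<zeta>^k - z^k)"
    by (simp add: sum_divide_distrib inv[unfolded divide_inverse, simplified] divide_inverse mult.assoc
        sum_distrib_right)
  also have "(\<Sum>j<k. (unit_root k ^ j)^(k-m) * S (unit_root k ^ j * z)) =
      (\<Sum>i<k. z^(k - Suc i) * \<zeta>^i * (\<Sum>j<k. (unit_root k ^ (2*k - 1 - m - i)) ^ j))"
  proof -
    have "(\<Sum>j<k. (unit_root k ^ j)^(k-m) * S (unit_root k ^ j * z)) =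
        (\<Sum>j<k. \<Sum>i<k. z^(k - Suc i) * \<zeta>^i * (unit_root k ^ (2*k - 1 - m - i)) ^ j)"
    proof (rule sum.cong[OF refl], unfold S_def sum_distrib_left, rule sum.cong[OF refl])
      fix j i assume "i \<in> {..<k}"
      then have "2*k - 1 - m - i = (k - m) + (k - Suc i)" using m by auto
      then have "(2*k - 1 - m - i) * j = j * (k - m) + j * (k - Suc i)"
        by (simp add: algebra_simps)
      then have e: "(unit_root k ^ (2*k - 1 - m - i)) ^ j =
          (unit_root k ^ j)^(k-m) * (unit_root k ^ j)^(k - Suc i)"
        by (simp only: power_mult[symmetric] power_add[symmetric])
      show "(unit_root k ^ j)^(k-m) * ((unit_root k ^ j * z)^(k - Suc i) * \<zeta>^i) =
          z^(k - Suc i) * \<zeta>^i * (unit_root k ^ (2*k - 1 - m - i)) ^ j"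
        unfolding e power_mult_distrib by (simp only: mult_ac)
    qed
    then show ?thesis by (simp only: sum_distrib_left) (rule sum.swap)
  qed
  also have "\<dots> = (\<Sum>i<k. if i = k - 1 - m then of_nat k * z^m * \<zeta>^(k-1-m) else 0)"
  proof (rule sum.cong[OF refl])
    fix i assume "i \<in> {..<k}"
    moreover have "k - Suc (k - 1 - m) = m" using m by auto
    ultimately show "z^(k - Suc i) * \<zeta>^i * (\<Sum>j<k. (unit_root k ^ (2*k - 1 - m - i)) ^ j) =
        (if i = k - 1 - m then of_nat k * z^m * \<zeta>^(k-1-m) else 0)"
      using sum_unit_root_powers_reflected[OF k m] by auto
  qed
  also have "\<dots> = of_nat k * z^m * \<zeta>^(k-1-m)" using m by (simp add: sum.delta)
  finally show ?thesis by (simp add: mult_ac)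
qed

lemma cholo_on_imp_holomorphic_on_slice:
  fixes g :: "'a::complex_euclidean_space \<times> complex \<Rightarrow> complex"
  assumes g: "cholo_on V g" and yV: "\<And>\<zeta>. norm \<zeta> \<le> r \<Longrightarrow> (y, \<zeta>) \<in> V"
  shows "(\<lambda>\<zeta>. g (y, \<zeta>)) holomorphic_on cball 0 r"
proof -
  have eq: "(y, 0) + cscale t (0::'a, 1::complex) = (y, t)" for t
    by (simp add: cscale_prod_def)
  have "((\<lambda>t. g ((y, 0) + cscale t (0::'a, 1::complex))) has_field_derivative
           frechet_derivative g (at ((y,0) + cscale t (0, 1))) (0, 1)) (at t)" if "norm t \<le> r" for t
    by (rule cholo_on_has_field_derivative_line[OF g]) (use yV that eq in auto)
  then show ?thesis unfolding eq holomorphic_on_def field_differentiable_def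
    by (metis has_field_derivative_at_within mem_cball_0)
qed

lemma has_contour_integral_cauchy_pow_integral:
  assumes g: "continuous_on (sphere 0 r) (\<lambda>\<zeta>. g (y, \<zeta>))" and r: "r > 0" and w: "norm w < r^k"
  shows "((\<lambda>\<zeta>. g (y, \<zeta>) * \<zeta>^q / (\<zeta>^k - w)) has_contour_integral cauchy_pow_integral g r k q (y, w))
    (circlepath 0 r)"
proof -
  have nz: "\<zeta>^k - w \<noteq> 0" if "\<zeta> \<in> sphere 0 r" for \<zeta>
    using that w by (auto simp: norm_power)
  have "continuous_on (sphere 0 r) (\<lambda>\<zeta>. g (y, \<zeta>) * \<zeta>^q / (\<zeta>^k - w))"
    by (intro continuous_intros g) (use nz in auto)
  then have "(\<lambda>\<zeta>. g (y, \<zeta>) * \<zeta>^q / (\<zeta>^k - w)) contour_integrable_on circlepath 0 r"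
    using r by (intro contour_integrable_continuous_circlepath) simp
  then show ?thesis
    unfolding cauchy_pow_integral_def by (simp add: has_contour_integral_integral)
qed

lemma cauchy_pow_integral_symmetrisation:
  fixes g :: "'a::complex_euclidean_space \<times> complex \<Rightarrow> complex"
  assumes g: "cholo_on V g" and r: "r > 0" and yV: "\<And>\<zeta>. norm \<zeta> \<le> r \<Longrightarrow> (y, \<zeta>) \<in> V"
    and k: "k \<ge> 1" and m: "m < k" and z: "norm z < r"
  shows "z^m * cauchy_pow_integral g r k (k-1-m) (y, z^k) =
     (2 * pi * \<i> / of_nat k) * (\<Sum>j<k. (unit_root k ^ j)^(k-m) * g (y, unit_root k ^ j * z))"
proof -
  define \<omega> where "\<omega> j = unit_root k ^ j" for j
  have hol: "(\<lambda>\<zeta>. g (y, \<zeta>)) holomorphic_on cball 0 r"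
    by (rule cholo_on_imp_holomorphic_on_slice[OF g yV])
  have cont: "continuous_on (cball 0 r) (\<lambda>\<zeta>. g (y, \<zeta>))"
    using hol by (rule holomorphic_on_imp_continuous_on)
  have "norm (z^k) < r^k"
    using z k by (simp add: norm_power power_strict_mono)
  then have "((\<lambda>\<zeta>. z^m * (g (y, \<zeta>) * \<zeta>^(k-1-m) / (\<zeta>^k - z^k))) has_contour_integral
      z^m * cauchy_pow_integral g r k (k-1-m) (y, z^k)) (circlepath 0 r)"
    using continuous_on_subset[OF cont sphere_cball] r
    by (intro has_contour_integral_lmul has_contour_integral_cauchy_pow_integral)
  moreover have "((\<lambda>\<zeta>. z^m * (g (y, \<zeta>) * \<zeta>^(k-1-m) / (\<zeta>^k - z^k))) has_contour_integral
      (\<Sum>j<k. \<omega> j^(k-m) / of_nat k * (2 * of_real pi * \<i> * g (y, \<omega> j * z)))) (circlepath 0 r)"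
  proof (rule has_contour_integral_eq)
    show "((\<lambda>\<zeta>. \<Sum>j<k. \<omega> j^(k-m) / of_nat k * (g (y, \<zeta>) / (\<zeta> - \<omega> j * z))) has_contour_integral
        (\<Sum>j<k. \<omega> j^(k-m) / of_nat k * (2 * of_real pi * \<i> * g (y, \<omega> j * z)))) (circlepath 0 r)"
      using z
      by (intro has_contour_integral_sum has_contour_integral_lmul
          Cauchy_integral_circlepath[OF cont holomorphic_on_subset[OF hol]])
         (auto simp: \<omega>_def norm_mult)
    fix \<zeta> assume "\<zeta> \<in> path_image (circlepath 0 r)"
    then have "norm \<zeta> = r" using r by simp
    moreover have "norm z ^ k < r ^ k"
      using z k by (intro power_strict_mono) auto
    ultimately have "norm (\<zeta>^k) \<noteq> norm (z^k)"
      by (simp add: norm_power)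
    then have ne: "\<zeta>^k \<noteq> z^k" by metis
    have "(\<Sum>j<k. \<omega> j^(k-m) / of_nat k * (g (y, \<zeta>) / (\<zeta> - \<omega> j * z))) =
        g (y, \<zeta>) / of_nat k * (\<Sum>j<k. \<omega> j^(k-m) / (\<zeta> - \<omega> j * z))"
      by (simp add: sum_distrib_left algebra_simps)
    also have "\<dots> = g (y, \<zeta>) / of_nat k * (of_nat k * \<zeta>^(k-1-m) * z^m / (\<zeta>^k - z^k))"
      unfolding \<omega>_def by (subst sum_unit_root_cauchy_kernel[OF k m ne]) (rule refl)
    also have "\<dots> = z^m * (g (y, \<zeta>) * \<zeta>^(k-1-m) / (\<zeta>^k - z^k))"
      using k by (simp add: field_simps)
    finally show "(\<Sum>j<k. \<omega> j^(k-m) / of_nat k * (g (y, \<zeta>) / (\<zeta> - \<omega> j * z))) =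
        z^m * (g (y, \<zeta>) * \<zeta>^(k-1-m) / (\<zeta>^k - z^k))" .
  qed
  ultimately have "z^m * cauchy_pow_integral g r k (k-1-m) (y, z^k) =
      (\<Sum>j<k. \<omega> j^(k-m) / of_nat k * (2 * of_real pi * \<i> * g (y, \<omega> j * z)))"
    by (rule has_contour_integral_unique)
  also have "\<dots> = (2 * pi * \<i> / of_nat k) * (\<Sum>j<k. \<omega> j^(k-m) * g (y, \<omega> j * z))"
    by (simp add: sum_distrib_left algebra_simps)
  finally show ?thesis unfolding \<omega>_def .
qed

lemma ex_complex_root_pow: "k \<ge> 1 \<Longrightarrow> \<exists>z::complex. z^k = w"
proof (cases "w = 0")
  case False
  assume k: "k \<ge> 1"
  have "exp (Ln w / of_nat k) ^ k = exp (of_nat k * (Ln w / of_nat k))"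
    by (rule exp_of_nat_mult[symmetric])
  also have "\<dots> = w" using k False by simp
  finally show ?thesis by blast
qed (auto intro: exI[of _ 0])

section \<open>Unfoldings, augmentations and lifts\<close>

lemma snd_unf_map [simp]: "snd (unf_map fl p) = snd p"
  by (simp add: unf_map_def split_beta)

lemma aug_map_eq: "aug_map fl \<phi> p = (fst (unf_map fl (fst p, \<phi> (snd p))), snd p)"
  by (simp add: aug_map_def unf_map_def split_beta)

lemma hgerm_atE:
  assumes "hgerm_at A f"
  obtains U where "open U" "A \<subseteq> U" "cholo_on U f"
  using assms unfolding hgerm_at_def by blast

lemma geqE:
  assumes "geq A f g"
  obtains U where "open U" "A \<subseteq> U" "\<And>x. x \<in> U \<Longrightarrow> f x = g x"
  using assms unfolding geq_def by blast

lemma geq_refl: "geq A g g"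
  unfolding geq_def by blast

lemma unfolding_vanishes_on_source:
  assumes "map_germ S f" "is_unfolding S f fl" "s \<in> S"
  shows "fl s 0 = 0"
proof -
  obtain U where "S \<subseteq> U" "\<And>x. x \<in> U \<Longrightarrow> fl x 0 = f x"
    using assms(2) unfolding is_unfolding_def geq_def by blast
  then show ?thesis using assms(1,3) by (auto simp: map_germ_def)
qed

lemma unf_map_derivative_snd:
  assumes "(unf_map fl has_derivative L) (at p)"
  shows "snd (L h) = snd h"
proof -
  have "((\<lambda>p. snd (unf_map fl p)) has_derivative (\<lambda>h. snd (L h))) (at p)"
    using assms by (rule has_derivative_snd)
  moreover have "((\<lambda>p. snd (unf_map fl p)) has_derivative snd) (at p)"
    by (simp add: has_derivative_snd[OF has_derivative_ident])
  ultimately have "(\<lambda>h. snd (L h)) = snd" by (rule has_derivative_unique)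
  then show ?thesis by metis
qed

lemma aug_map_has_derivative:
  fixes fl :: "'a::real_normed_vector \<Rightarrow> complex \<Rightarrow> 'b::real_normed_vector"
  assumes \<phi>: "(\<phi> has_field_derivative d) (at z)" and L: "(unf_map fl has_derivative L) (at (x, \<phi> z))"
  shows "(aug_map fl \<phi> has_derivative (\<lambda>h. (fst (L (fst h, d * snd h)), snd h))) (at (x, z))"
proof -
  have "(snd has_derivative snd) (at (x, z))"
    by (rule bounded_linear.has_derivative[OF bounded_linear_snd has_derivative_ident, simplified])
  moreover have "(\<phi> has_derivative (\<lambda>h. h * d)) (at (snd (x, z)))"
    unfolding snd_conv by (rule has_derivative_eq_rhs[OF \<phi>[unfolded has_field_derivative_def]]) (auto simp: mult.commute)
  ultimately have "((\<lambda>p::'a \<times> complex. \<phi> (snd p)) has_derivative (\<lambda>h. snd h * d)) (at (x, z))"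
    by (rule has_derivative_compose)
  then have "((\<lambda>p::'a \<times> complex. \<phi> (snd p)) has_derivative (\<lambda>h. d * snd h)) (at (x, z))"
    by (simp add: mult.commute)
  then have "((\<lambda>p::'a \<times> complex. (fst p, \<phi> (snd p))) has_derivative (\<lambda>h. (fst h, d * snd h))) (at (x, z))"
    by (intro has_derivative_Pair has_derivative_fst[OF has_derivative_ident])
  moreover have "(unf_map fl has_derivative L) (at ((\<lambda>p::'a \<times> complex. (fst p, \<phi> (snd p))) (x, z)))"
    using L by simp
  ultimately have "((\<lambda>p. unf_map fl (fst p, \<phi> (snd p))) has_derivative (\<lambda>h. L (fst h, d * snd h))) (at (x, z))"
    by (rule has_derivative_compose)
  from has_derivative_Pair[OF has_derivative_fst[OF this] has_derivative_snd[OF has_derivative_ident]]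
  show ?thesis by (simp add: aug_map_eq[abs_def])
qed

definition pullback_field ::
    "(complex \<Rightarrow> complex) \<Rightarrow> ('b::complex_euclidean_space \<times> complex \<Rightarrow> 'b \<times> complex) \<Rightarrow> 'b \<times> complex \<Rightarrow> 'b \<times> complex"
  where "pullback_field \<phi> \<eta> = (\<lambda>(X, z). (cscale (deriv \<phi> z) (fst (\<eta> (X, \<phi> z))), snd (\<eta> (X, \<phi> z))))"

lemma cholo_on_pullback_field:
  assumes \<phi>: "\<phi> holomorphic_on UNIV" and \<eta>: "cholo_on U \<eta>"
  shows "cholo_on ((\<lambda>p. (fst p, \<phi> (snd p))) -` U) (pullback_field \<phi> \<eta>)"
proof -
  define V where "V = (\<lambda>p. (fst p, \<phi> (snd p))) -` U"
  have cont_\<phi>: "continuous_on UNIV \<phi>" by (rule holomorphic_on_imp_continuous_on[OF \<phi>])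
  have V: "open V"
    unfolding V_def using cholo_on_open[OF \<eta>]
    by (intro open_vimage continuous_on_Pair continuous_intros continuous_on_compose2[OF cont_\<phi>]) auto
  have snd_V: "cholo_on V snd"
    using cholo_on_snd[OF cholo_on_id[OF V]] by simp
  have "cholo_on V (\<lambda>p. \<phi> (snd p))"
    by (rule cholo_on_compose[OF snd_V cholo_on_holomorphic_on[OF open_UNIV \<phi>]]) simp
  then have "cholo_on V (\<lambda>p. \<eta> (fst p, \<phi> (snd p)))"
    using cholo_on_fst[OF cholo_on_id[OF V]]
    by (intro cholo_on_compose[OF _ \<eta>] cholo_on_Pair) (auto simp: V_def)
  moreover have "cholo_on V (\<lambda>p. deriv \<phi> (snd p))"
    by (rule cholo_on_compose[OF snd_V cholo_on_holomorphic_on[OF open_UNIV holomorphic_deriv[OF \<phi>]]])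
       simp_all
  ultimately show ?thesis
    unfolding V_def[symmetric] pullback_field_def split_beta
    by (intro cholo_on_Pair cholo_on_cscale cholo_on_fst cholo_on_snd)
qed

lemma tmap_aug_map_pullback_field:
  fixes fl :: "'a::complex_euclidean_space \<Rightarrow> complex \<Rightarrow> 'b::complex_euclidean_space"
  assumes \<phi>: "\<phi> holomorphic_on UNIV"
    and UF: "cholo_on U (unf_map fl)" "(x, \<phi> z) \<in> U"
    and lift: "tmap (unf_map fl) \<xi> (x, \<phi> z) = wmap (unf_map fl) \<eta> (x, \<phi> z)"
  shows "tmap (aug_map fl \<phi>) (pullback_field \<phi> \<xi>) (x, z) = wmap (aug_map fl \<phi>) (pullback_field \<phi> \<eta>) (x, z)"
proof -
  define DF where "DF = frechet_derivative (unf_map fl) (at (x, \<phi> z))"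
  define d where "d = deriv \<phi> z"
  have "(\<phi> has_field_derivative d) (at z)"
    unfolding d_def using \<phi> by (auto intro: holomorphic_derivI)
  from aug_map_has_derivative[OF this cholo_on_has_derivative[OF UF]]
  have dA: "frechet_derivative (aug_map fl \<phi>) (at (x, z)) = (\<lambda>h. (fst (DF (fst h, d * snd h)), snd h))"
    unfolding DF_def by (rule frechet_derivative_at[symmetric])
  have DF_lift: "DF (\<xi> (x, \<phi> z)) = \<eta> (fl x (\<phi> z), \<phi> z)"
    using lift by (simp add: tmap_def wmap_def DF_def unf_map_def)
  have DF_cscale: "DF (cscale c v) = cscale c (DF v)" for c v
    unfolding DF_def by (rule frechet_derivative_cscale[OF UF])
  have DF_snd: "snd (DF h) = snd h" for h
    unfolding DF_def by (rule unf_map_derivative_snd[OF cholo_on_has_derivative[OF UF]])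
  have "tmap (aug_map fl \<phi>) (pullback_field \<phi> \<xi>) (x, z) =
      (fst (DF (cscale d (\<xi> (x, \<phi> z)))), snd (\<xi> (x, \<phi> z)))"
    by (simp add: tmap_def dA pullback_field_def d_def cscale_prod_def)
  also have "\<dots> = (cscale d (fst (\<eta> (fl x (\<phi> z), \<phi> z))), snd (\<eta> (fl x (\<phi> z), \<phi> z)))"
    using DF_snd[of "\<xi> (x, \<phi> z)"] by (simp add: DF_cscale DF_lift fst_cscale)
  also have "\<dots> = wmap (aug_map fl \<phi>) (pullback_field \<phi> \<eta>) (x, z)"
    by (simp add: wmap_def pullback_field_def aug_map_def d_def)
  finally show ?thesis .
qed

lemma pullback_field_in_Lift:
  fixes fl :: "'a::complex_euclidean_space \<Rightarrow> complex \<Rightarrow> 'b::complex_euclidean_space"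
  assumes \<phi>: "\<phi> holomorphic_on UNIV" "\<phi> 0 = 0"
    and F: "hgerm_at (S \<times> {0}) (unf_map fl)" and \<eta>: "\<eta> \<in> Lift (S \<times> {0}) (unf_map fl)"
  shows "pullback_field \<phi> \<eta> \<in> Lift (S \<times> {0}) (aug_map fl \<phi>)"
proof -
  define \<Phi> where "\<Phi> p = (fst p, \<phi> (snd p))" for p :: "'a \<times> complex"
  define \<Phi>' where "\<Phi>' p = (fst p, \<phi> (snd p))" for p :: "'b \<times> complex"
  obtain UF where UF: "open UF" "S \<times> {0} \<subseteq> UF" "cholo_on UF (unf_map fl)"
    using F by (rule hgerm_atE)
  obtain T where T: "open T" "{0} \<subseteq> T" "cholo_on T \<eta>"
    using \<eta> unfolding Lift_def by (auto elim: hgerm_atE)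
  obtain \<xi> where \<xi>: "hgerm_at (S \<times> {0}) \<xi>" "geq (S \<times> {0}) (tmap (unf_map fl) \<xi>) (wmap (unf_map fl) \<eta>)"
    using \<eta> unfolding Lift_def by auto
  obtain U where U: "open U" "S \<times> {0} \<subseteq> U" "cholo_on U \<xi>"
    using \<xi>(1) by (rule hgerm_atE)
  obtain G where G: "open G" "S \<times> {0} \<subseteq> G"
    "\<And>p. p \<in> G \<Longrightarrow> tmap (unf_map fl) \<xi> p = wmap (unf_map fl) \<eta> p"
    using geqE[OF \<xi>(2)] by metis
  have \<Phi>_fix: "\<Phi> p = p" if "snd p = 0" for p
    using that \<phi>(2) by (simp add: \<Phi>_def prod_eq_iff)
  have \<Phi>': "cholo_on (\<Phi>' -` T) (pullback_field \<phi> \<eta>)"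
    using cholo_on_pullback_field[OF \<phi>(1) T(3)] by (simp add: \<Phi>'_def[abs_def])
  have \<Phi>: "cholo_on (\<Phi> -` W) (pullback_field \<phi> \<xi>)" if "W \<subseteq> U" "open W" for W
    using cholo_on_pullback_field[OF \<phi>(1) cholo_on_subset[OF U(3) that(2,1)]] by (simp add: \<Phi>_def[abs_def])
  have open_vimage_\<Phi>: "open (\<Phi> -` W)" if "W \<subseteq> U" "open W" for W
    by (rule cholo_on_open[OF \<Phi>[OF that]])
  have "hgerm_at (S \<times> {0}) (pullback_field \<phi> \<xi>)"
    unfolding hgerm_at_def
  proof (intro exI conjI)
    show "S \<times> {0} \<subseteq> \<Phi> -` U" using U(2) \<Phi>_fix by auto
  qed (use open_vimage_\<Phi> \<Phi> U(1) in auto)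
  moreover have "hgerm_at {0} (pullback_field \<phi> \<eta>)"
    unfolding hgerm_at_def
  proof (intro exI conjI)
    show "{0} \<subseteq> \<Phi>' -` T" using T(2) \<phi>(2) by (simp add: \<Phi>'_def zero_prod_def)
  qed (use cholo_on_open[OF \<Phi>'] \<Phi>' in auto)
  moreover have "geq (S \<times> {0}) (tmap (aug_map fl \<phi>) (pullback_field \<phi> \<xi>)) (wmap (aug_map fl \<phi>) (pullback_field \<phi> \<eta>))"
    unfolding geq_def
  proof (intro exI[of _ "\<Phi> -` (G \<inter> UF \<inter> U)"] conjI ballI)
    show "open (\<Phi> -` (G \<inter> UF \<inter> U))" using G(1) UF(1) U(1) by (intro open_vimage_\<Phi>) auto
    show "S \<times> {0} \<subseteq> \<Phi> -` (G \<inter> UF \<inter> U)" using \<Phi>_fix G(2) UF(2) U(2) by auto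
    fix p assume "p \<in> \<Phi> -` (G \<inter> UF \<inter> U)"
    then show "tmap (aug_map fl \<phi>) (pullback_field \<phi> \<xi>) p = wmap (aug_map fl \<phi>) (pullback_field \<phi> \<eta>) p"
      using tmap_aug_map_pullback_field[OF \<phi>(1) UF(3), of "fst p" "snd p" \<xi> \<eta>] G(3)
      by (auto simp: \<Phi>_def)
  qed
  ultimately show ?thesis
    unfolding Lift_def by blast
qed

lemma pi2_istar_pullback_field: "\<phi> 0 = 0 \<Longrightarrow> pi2_istar (pullback_field \<phi> \<eta>) = pi2_istar \<eta>"
  by (simp add: pi2_istar_def pullback_field_def)

section \<open>Descending lifts of the augmentation\<close>

lemma continuous_on_eq_off_hyperplane:
  fixes f g :: "'a::real_normed_vector \<times> complex \<Rightarrow> 'c::real_normed_vector"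
  assumes D: "open D" and f: "continuous_on D f" and g: "continuous_on D g"
    and eq: "\<And>p. p \<in> D \<Longrightarrow> snd p \<noteq> 0 \<Longrightarrow> f p = g p" and p: "p \<in> D"
  shows "f p = g p"
proof (cases "snd p = 0")
  case True
  then obtain x where px: "p = (x, 0)" by (cases p) auto
  define q where "q n = (x, 1 / of_nat (Suc n) :: complex)" for n :: nat
  have q: "q \<longlonglongrightarrow> p"
    unfolding q_def px by (intro tendsto_intros LIMSEQ_Suc[OF lim_1_over_n])
  have ev: "eventually (\<lambda>n. q n \<in> D) sequentially"
    using q D p by (rule topological_tendstoD)
  then have "eventually (\<lambda>n. f (q n) = g (q n)) sequentially"
    by eventually_elim (auto intro!: eq simp: q_def simp del: of_nat_Suc)
  moreover have "(\<lambda>n. f (q n)) \<longlonglongrightarrow> f p"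
    using continuous_on_tendsto_compose[OF f q p ev] .
  ultimately have "(\<lambda>n. g (q n)) \<longlonglongrightarrow> f p"
    by (rule Lim_transform_eventually[rotated])
  then show ?thesis
    using continuous_on_tendsto_compose[OF g q p ev] LIMSEQ_unique by blast
qed (use eq p in blast)

lemma finite_tube_subset_open:
  fixes S :: "'a::real_normed_vector set"
  assumes "finite S" "open W" "S \<times> {0::'b::real_normed_vector} \<subseteq> W"
  obtains \<delta> where "\<delta> > 0" "\<And>x \<zeta>. x \<in> (\<Union>s\<in>S. ball s \<delta>) \<Longrightarrow> norm \<zeta> \<le> \<delta> \<Longrightarrow> (x, \<zeta>) \<in> W"
proof -
  obtain e where e: "e > 0" "(\<Union>p\<in>S \<times> {0}. cball p e) \<subseteq> W"
    using compact_subset_open_imp_cball_epsilon_subset[OF finite_imp_compact[of "S \<times> {0::'b}"] assms(2,3)]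
      assms(1) by auto
  show ?thesis
  proof
    show "e / 2 > 0" using e by simp
    fix x and \<zeta> :: 'b assume "x \<in> (\<Union>s\<in>S. ball s (e / 2))" "norm \<zeta> \<le> e / 2"
    then obtain s where s: "s \<in> S" "norm (x - s) < e / 2" "norm \<zeta> \<le> e / 2"
      by (auto simp: dist_norm norm_minus_commute)
    have "dist (x, \<zeta>) (s, 0) \<le> norm (x - s) + norm \<zeta>"
      using norm_Pair_le[of "x - s" \<zeta>] by (simp add: dist_norm)
    with s e show "(x, \<zeta>) \<in> W" by (force simp: dist_commute)
  qed
qed

text \<open>Written with Cauchy integrals so that it is visibly holomorphic in \<open>\<lambda>\<close>. At \<open>\<lambda> = c z^k\<close> it equals
  \<open>(1 / (k \<phi>'(z))) \<Sum>\<^sub>j \<omega>^j d\<Phi>(v(y, \<omega>^j z))\<close>, where \<open>\<phi> z = c z^k\<close>, \<open>\<Phi>(y, z) = (y, \<phi> z)\<close>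
  and \<open>\<omega>\<close> is a primitive \<open>k\<close>-th root of unity (\<open>cscale_descended_field\<close>).\<close>

definition descended_field ::
    "complex \<Rightarrow> nat \<Rightarrow> real \<Rightarrow> ('a \<times> complex \<Rightarrow> (complex^'m) \<times> complex) \<Rightarrow> 'a \<times> complex \<Rightarrow> (complex^'m) \<times> complex"
  where "descended_field c k r v = (\<lambda>(y, l).
    ((\<chi> i. cauchy_pow_integral (\<lambda>p. fst (v p) $ i) r k 0 (y, l / c) / (c * of_nat k * (2 * pi * \<i>))),
     cauchy_pow_integral (\<lambda>p. snd (v p)) r k (k - 1) (y, l / c) / (2 * pi * \<i>)))"

lemma cholo_on_descended_field:
  fixes v :: "'a::complex_euclidean_space \<times> complex \<Rightarrow> (complex^'m) \<times> complex"
  assumes v: "cholo_on V v" and Y: "open Y" and r: "r > 0"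
    and YV: "\<And>y \<zeta>. y \<in> Y \<Longrightarrow> norm \<zeta> \<le> r \<Longrightarrow> (y, \<zeta>) \<in> V"
  shows "cholo_on ((\<lambda>p. (fst p, snd p / c)) -` (Y \<times> ball 0 (r^k))) (descended_field c k r v)"
proof -
  define D where "D = (\<lambda>p::'a \<times> complex. (fst p, snd p / c)) -` (Y \<times> ball 0 (r^k))"
  have M: "cholo_on D (\<lambda>p. (fst p, snd p / c))"
  proof -
    have "open D"
      unfolding D_def divide_inverse using Y by (intro open_vimage open_Times continuous_intros) auto
    then show ?thesis
      unfolding divide_inverse
      by (intro cholo_on_Pair cholo_on_fst cholo_on_mult cholo_on_snd cholo_on_id cholo_on_const)
  qed
  have I: "cholo_on D (\<lambda>p. cauchy_pow_integral g r k q (fst p, snd p / c))"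
    if "cholo_on V g" for g q
    by (rule cholo_on_compose[OF M cholo_on_cauchy_pow_integral[OF that Y r YV]]) (auto simp: D_def)
  show ?thesis
    unfolding D_def[symmetric] descended_field_def split_beta divide_inverse[of "cauchy_pow_integral _ _ _ _ _"]
    using cholo_on_open[OF M]
    by (intro cholo_on_Pair cholo_on_vec_lambda cholo_on_mult I cholo_on_const
        cholo_on_vec_nth cholo_on_fst cholo_on_snd v)
qed

lemma snd_descended_field_0:
  fixes v :: "'a::complex_euclidean_space \<times> complex \<Rightarrow> (complex^'m) \<times> complex"
  assumes v: "cholo_on V v" and r: "r > 0" and yV: "\<And>\<zeta>. norm \<zeta> \<le> r \<Longrightarrow> (y, \<zeta>) \<in> V" and k: "k \<ge> 1"
  shows "snd (descended_field c k r v (y, 0)) = snd (v (y, 0))"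
proof -
  have "cauchy_pow_integral (\<lambda>p. snd (v p)) r k (k - 1) (y, 0) = 2 * pi * \<i> * snd (v (y, 0))"
    using cauchy_pow_integral_symmetrisation[OF cholo_on_snd[OF v] r yV k, of 0 0] k r
    by (simp add: zero_power)
  then show ?thesis
    by (simp add: descended_field_def)
qed

lemma unit_root_pow_mult_pow_pred:
  "k \<ge> 1 \<Longrightarrow> unit_root k ^ j * (unit_root k ^ j * z)^(k-1) = z^(k-1)"
proof -
  assume "k \<ge> 1"
  then obtain k' where "k = Suc k'" by (cases k) auto
  then have "unit_root k ^ j * (unit_root k ^ j * z)^(k-1) = (unit_root k ^ j)^k * z^(k-1)"
    by (simp add: power_mult_distrib)
  then show ?thesis using \<open>k \<ge> 1\<close> by simp
qed

lemma cscale_descended_field: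
  fixes v :: "'a::complex_euclidean_space \<times> complex \<Rightarrow> (complex^'m) \<times> complex"
  assumes v: "cholo_on V v" and r: "r > 0" and yV: "\<And>\<zeta>. norm \<zeta> \<le> r \<Longrightarrow> (y, \<zeta>) \<in> V"
    and k: "k \<ge> 1" and c: "c \<noteq> 0" and z: "norm z < r"
  shows "cscale (of_nat k * (c * of_nat k * z^(k-1))) (descended_field c k r v (y, c * z^k)) =
      (\<Sum>j<k. cscale (unit_root k ^ j) (fst (v (y, unit_root k ^ j * z)),
        c * of_nat k * (unit_root k ^ j * z)^(k-1) * snd (v (y, unit_root k ^ j * z))))"
proof -
  define \<kappa> where "\<kappa> = 2 * pi * \<i>"
  define \<omega> where "\<omega> j = unit_root k ^ j" for j
  have \<kappa>: "\<kappa> \<noteq> 0" by (simp add: \<kappa>_def)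
  have v_i: "cholo_on V (\<lambda>p. fst (v p) $ i)" for i by (intro cholo_on_vec_nth cholo_on_fst v)
  have v_z: "cholo_on V (\<lambda>p. snd (v p))" by (intro cholo_on_snd v)
  note sym = cauchy_pow_integral_symmetrisation[OF _ r yV k]
  define s where "s = of_nat k * (c * of_nat k * z^(k-1))"
  have k0: "(of_nat k :: complex) \<noteq> 0" using k by simp
  have l: "c * z^k / c = z^k" using c by simp
  have fst_eq: "fst (cscale s (descended_field c k r v (y, c * z^k))) $ i =
      (\<Sum>j<k. \<omega> j * (fst (v (y, \<omega> j * z)) $ i))" for i
  proof -
    have "fst (cscale s (descended_field c k r v (y, c * z^k))) $ i =
        of_nat k / \<kappa> * (z^(k-1) * cauchy_pow_integral (\<lambda>p. fst (v p) $ i) r k 0 (y, z^k))"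
      using c k0 \<kappa> by (simp add: descended_field_def cscale_prod_def cscale_vec_def l s_def \<kappa>_def)
    also have "\<dots> = of_nat k / \<kappa> * (\<kappa> / of_nat k * (\<Sum>j<k. \<omega> j * (fst (v (y, \<omega> j * z)) $ i)))"
      using sym[OF v_i, of "k-1" z] z k by (simp add: \<kappa>_def \<omega>_def)
    also have "\<dots> = (\<Sum>j<k. \<omega> j * (fst (v (y, \<omega> j * z)) $ i))"
      using k0 \<kappa> by simp
    finally show ?thesis .
  qed
  have \<omega>_shift: "\<omega> j * (c * of_nat k * (\<omega> j * z)^(k-1)) = c * of_nat k * z^(k-1)" for j
    using unit_root_pow_mult_pow_pred[OF k, of j z] by (simp add: \<omega>_def mult.left_commute)
  have snd_eq: "snd (cscale s (descended_field c k r v (y, c * z^k))) =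
      (\<Sum>j<k. \<omega> j * (c * of_nat k * (\<omega> j * z)^(k-1) * snd (v (y, \<omega> j * z))))"
  proof -
    have "snd (cscale s (descended_field c k r v (y, c * z^k))) =
        c * of_nat k * z^(k-1) * (of_nat k / \<kappa> * cauchy_pow_integral (\<lambda>p. snd (v p)) r k (k - 1) (y, z^k))"
      by (simp add: descended_field_def cscale_prod_def l s_def \<kappa>_def)
    also have "\<dots> = c * of_nat k * z^(k-1) * (of_nat k / \<kappa> * (\<kappa> / of_nat k * (\<Sum>j<k. snd (v (y, \<omega> j * z)))))"
      using sym[OF v_z, of 0 z] z k by (simp add: \<kappa>_def \<omega>_def)
    also have "\<dots> = (\<Sum>j<k. c * of_nat k * z^(k-1) * snd (v (y, \<omega> j * z)))"
      using k0 \<kappa> by (simp add: sum_distrib_left)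
    also have "\<dots> = (\<Sum>j<k. \<omega> j * (c * of_nat k * (\<omega> j * z)^(k-1)) * snd (v (y, \<omega> j * z)))"
      by (intro sum.cong refl) (simp only: \<omega>_shift)
    finally show ?thesis by (simp add: mult.assoc)
  qed
  show ?thesis
    using fst_eq snd_eq unfolding s_def
    by (simp add: \<omega>_def[symmetric] prod_eq_iff vec_eq_iff fst_sum snd_sum cscale_prod_def
        cscale_vec_def)
qed

lemma tmap_descended_field:
  fixes fl :: "complex^'n \<Rightarrow> complex \<Rightarrow> complex^'p"
  assumes UF: "cholo_on UF (unf_map fl)" "(x, c * z^k) \<in> UF"
    and k: "k \<ge> 1" and c: "c \<noteq> 0" and z: "z \<noteq> 0"
    and \<xi>': "cholo_on U \<xi>'" "\<And>\<zeta>. norm \<zeta> \<le> r \<Longrightarrow> (x, \<zeta>) \<in> U" "r > 0" "norm z < r"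
    and \<eta>': "cholo_on T \<eta>'" "\<And>\<zeta>. norm \<zeta> \<le> R \<Longrightarrow> (fl x (c * z^k), \<zeta>) \<in> T" "R > 0" "norm z < R"
    and lift: "\<And>j. tmap (aug_map fl (\<lambda>z. c * z^k)) \<xi>' (x, unit_root k ^ j * z) =
                    wmap (aug_map fl (\<lambda>z. c * z^k)) \<eta>' (x, unit_root k ^ j * z)"
  shows "tmap (unf_map fl) (descended_field c k r \<xi>') (x, c * z^k) =
    wmap (unf_map fl) (descended_field c k R \<eta>') (x, c * z^k)"
proof -
  define w where "w j = unit_root k ^ j * z" for j
  define d where "d \<zeta> = c * of_nat k * \<zeta>^(k-1)" for \<zeta> :: complex
  define DF where "DF = frechet_derivative (unf_map fl) (at (x, c * z^k))"
  define X where "X = fl x (c * z^k)"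
  have DF: "(unf_map fl has_derivative DF) (at (x, c * z^k))"
    unfolding DF_def by (rule cholo_on_has_derivative[OF UF])
  have DF_cscale: "DF (cscale a v) = cscale a (DF v)" for a v
    unfolding DF_def by (rule frechet_derivative_cscale[OF UF])
  have DF_snd: "snd (DF h) = snd h" for h
    by (rule unf_map_derivative_snd[OF DF])
  have lifted: "DF (fst (\<xi>' (x, w j)), d (w j) * snd (\<xi>' (x, w j))) =
      (fst (\<eta>' (X, w j)), d (w j) * snd (\<eta>' (X, w j)))" for j
  proof -
    have wk: "c * w j ^ k = c * z^k"
      using k by (simp add: w_def power_mult_distrib)
    have "((\<lambda>\<zeta>. c * \<zeta>^k) has_field_derivative d (w j)) (at (w j))"
      unfolding d_def by (auto intro!: derivative_eq_intros)
    from aug_map_has_derivative[OF this DF[folded wk]]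
    have "frechet_derivative (aug_map fl (\<lambda>\<zeta>. c * \<zeta>^k)) (at (x, w j)) =
        (\<lambda>h. (fst (DF (fst h, d (w j) * snd h)), snd h))"
      by (rule frechet_derivative_at[symmetric])
    then have "(fst (DF (fst (\<xi>' (x, w j)), d (w j) * snd (\<xi>' (x, w j)))), snd (\<xi>' (x, w j))) = \<eta>' (X, w j)"
      using lift[of j] by (simp add: tmap_def wmap_def aug_map_def w_def[symmetric] wk X_def)
    then show ?thesis
      using DF_snd by (auto simp: prod_eq_iff)
  qed
  define s where "s = of_nat k * d z"
  have s: "s \<noteq> 0" using k c z by (simp add: s_def d_def)
  have \<xi>_avg: "cscale s (descended_field c k r \<xi>' (x, c * z^k)) =
      (\<Sum>j<k. cscale (unit_root k ^ j) (fst (\<xi>' (x, w j)), d (w j) * snd (\<xi>' (x, w j))))"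
    unfolding s_def d_def w_def by (rule cscale_descended_field[OF \<xi>'(1) \<xi>'(3) \<xi>'(2) k c \<xi>'(4)])
  have \<eta>_avg: "cscale s (descended_field c k R \<eta>' (X, c * z^k)) =
      (\<Sum>j<k. cscale (unit_root k ^ j) (fst (\<eta>' (X, w j)), d (w j) * snd (\<eta>' (X, w j))))"
    unfolding s_def d_def w_def X_def by (rule cscale_descended_field[OF \<eta>'(1) \<eta>'(3) \<eta>'(2) k c \<eta>'(4)])
  have "DF (cscale s (descended_field c k r \<xi>' (x, c * z^k))) =
      (\<Sum>j<k. cscale (unit_root k ^ j) (DF (fst (\<xi>' (x, w j)), d (w j) * snd (\<xi>' (x, w j)))))"
    unfolding \<xi>_avg by (simp add: linear_sum[OF has_derivative_linear[OF DF]] DF_cscale)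
  also have "\<dots> = cscale s (descended_field c k R \<eta>' (X, c * z^k))"
    unfolding lifted \<eta>_avg ..
  finally have "DF (descended_field c k r \<xi>' (x, c * z^k)) = descended_field c k R \<eta>' (X, c * z^k)"
    unfolding DF_cscale by (rule cscale_left_cancel[OF s])
  then show ?thesis
    by (simp add: tmap_def wmap_def DF_def X_def unf_map_def)
qed

lemma descended_field_lift:
  fixes fl :: "complex^'n \<Rightarrow> complex \<Rightarrow> complex^'p"
  assumes UF: "cholo_on UF (unf_map fl)" and \<xi>': "cholo_on U \<xi>'" and \<eta>': "cholo_on T \<eta>'"
    and k: "k \<ge> 1" and c: "c \<noteq> 0" and \<delta>: "\<delta> > 0" and \<rho>: "\<rho> > 0" and Y: "open Y"
    and tube: "\<And>x \<zeta>. x \<in> Y \<Longrightarrow> norm \<zeta> \<le> \<delta> \<Longrightarrow> (x, \<zeta>) \<in> U \<inter> UF \<and> norm (fl x \<zeta>) < \<rho> \<and>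
      tmap (aug_map fl (\<lambda>z. c * z^k)) \<xi>' (x, \<zeta>) = wmap (aug_map fl (\<lambda>z. c * z^k)) \<eta>' (x, \<zeta>)"
    and target: "\<And>X \<zeta>. norm X < \<rho> \<Longrightarrow> norm \<zeta> \<le> \<rho> \<Longrightarrow> (X, \<zeta>) \<in> T"
    and p: "p \<in> Y \<times> ball 0 (min \<delta> (norm c * min \<delta> \<rho> ^ k))"
  shows "tmap (unf_map fl) (descended_field c k \<delta> \<xi>') p = wmap (unf_map fl) (descended_field c k \<rho> \<eta>') p"
proof -
  define D where "D = Y \<times> ball (0::complex) (min \<delta> (norm c * min \<delta> \<rho> ^ k))"
  define M where "M q = (fst q, snd q / c)" for q :: "'b \<times> complex"
  have D: "open D" using Y by (simp add: D_def open_Times)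
  have small: "norm (l / c) < \<delta>^k" "norm (l / c) < \<rho>^k" if "norm l < norm c * min \<delta> \<rho> ^ k" for l
  proof -
    have "norm c * min \<delta> \<rho> ^ k \<le> norm c * \<delta>^k" "norm c * min \<delta> \<rho> ^ k \<le> norm c * \<rho>^k"
      using \<delta> \<rho> by (intro mult_left_mono power_mono; simp)+
    with that have "norm l < \<delta>^k * norm c" "norm l < \<rho>^k * norm c"
      by (simp_all only: mult.commute[of _ "norm c"])
    then show "norm (l / c) < \<delta>^k" "norm (l / c) < \<rho>^k"
      using c by (simp_all add: norm_divide pos_divide_less_eq)
  qed
  have inD: "fst q \<in> Y" "norm (snd q) < \<delta>" "norm (snd q / c) < \<delta>^k" "norm (snd q / c) < \<rho>^k"
    if "q \<in> D" for q
    using that small[of "snd q"] by (auto simp: D_def mem_Times_iff)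
  have \<xi>: "cholo_on ((\<lambda>q. (fst q, snd q / c)) -` (Y \<times> ball 0 (\<delta>^k))) (descended_field c k \<delta> \<xi>')"
    by (rule cholo_on_descended_field[OF \<xi>' Y \<delta>]) (use tube in blast)
  have \<eta>: "cholo_on ((\<lambda>q. (fst q, snd q / c)) -` (ball 0 \<rho> \<times> ball 0 (\<rho>^k))) (descended_field c k \<rho> \<eta>')"
    by (rule cholo_on_descended_field[OF \<eta>' open_ball \<rho>]) (use target in simp)
  have FD: "cholo_on D (unf_map fl)"
    using tube D inD(1,2) by (intro cholo_on_subset[OF UF]) (auto simp: less_imp_le)
  have off_axis: "tmap (unf_map fl) (descended_field c k \<delta> \<xi>') q = wmap (unf_map fl) (descended_field c k \<rho> \<eta>') q"
    if q: "q \<in> D" "snd q \<noteq> 0" for q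
  proof -
    obtain x l where qxl: "q = (x, l)" by (cases q)
    have x: "x \<in> Y" and l: "norm l < \<delta>" "norm (l / c) < \<delta>^k" "norm (l / c) < \<rho>^k" "l \<noteq> 0"
      using q inD[of q] by (auto simp: qxl)
    obtain z where z: "z^k = l / c" using ex_complex_root_pow[OF k] by blast
    have lz: "l = c * z^k" using z c by simp
    have "z \<noteq> 0" using z l(4) c k by (auto simp: zero_power)
    moreover have "norm z < \<delta>" "norm z < \<rho>"
      using l(2,3) \<delta> \<rho> by (auto simp: z[symmetric] norm_power power_less_imp_less_base)
    moreover have "norm (unit_root k ^ j * z) = norm z" for j
      by (simp add: norm_mult)
    ultimately show ?thesis
      unfolding qxl lz
      by (intro tmap_descended_field[OF UF _ k c _ \<xi>' _ \<delta> _ \<eta>' _ \<rho>])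
         (use tube[OF x] target tube[OF x, of "c * z^k"] l(1) lz in auto)
  qed
  have "continuous_on D (tmap (unf_map fl) (descended_field c k \<delta> \<xi>'))"
    by (intro continuous_on_tmap FD continuous_on_subset[OF cholo_on_imp_continuous_on[OF \<xi>]])
       (use inD in auto)
  moreover have "continuous_on D (wmap (unf_map fl) (descended_field c k \<rho> \<eta>'))"
    unfolding wmap_def
    by (rule continuous_on_compose[OF cholo_on_imp_continuous_on[OF FD]
        continuous_on_subset[OF cholo_on_imp_continuous_on[OF \<eta>]]])
       (use inD tube in \<open>auto simp: unf_map_def less_imp_le\<close>)
  ultimately show ?thesis
    using continuous_on_eq_off_hyperplane[OF D _ _ off_axis] p by (simp add: D_def)
qed

lemma descended_field_in_Lift:
  fixes fl :: "complex^'n \<Rightarrow> complex \<Rightarrow> complex^'p"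
  assumes UF: "cholo_on UF (unf_map fl)" and \<xi>': "cholo_on U \<xi>'" and \<eta>': "cholo_on T \<eta>'"
    and k: "k \<ge> 1" and c: "c \<noteq> 0" and \<delta>: "\<delta> > 0" and \<rho>: "\<rho> > 0" and Y: "open Y" "S \<subseteq> Y"
    and tube: "\<And>x \<zeta>. x \<in> Y \<Longrightarrow> norm \<zeta> \<le> \<delta> \<Longrightarrow> (x, \<zeta>) \<in> U \<inter> UF \<and> norm (fl x \<zeta>) < \<rho> \<and>
      tmap (aug_map fl (\<lambda>z. c * z^k)) \<xi>' (x, \<zeta>) = wmap (aug_map fl (\<lambda>z. c * z^k)) \<eta>' (x, \<zeta>)"
    and target: "\<And>X \<zeta>. norm X < \<rho> \<Longrightarrow> norm \<zeta> \<le> \<rho> \<Longrightarrow> (X, \<zeta>) \<in> T"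
  shows "descended_field c k \<rho> \<eta>' \<in> Lift (S \<times> {0}) (unf_map fl)"
    and "geq {0} (pi2_istar \<eta>') (pi2_istar (descended_field c k \<rho> \<eta>'))"
proof -
  define \<xi> where "\<xi> = descended_field c k \<delta> \<xi>'"
  define \<eta> where "\<eta> = descended_field c k \<rho> \<eta>'"
  have "cholo_on ((\<lambda>q. (fst q, snd q / c)) -` (Y \<times> ball 0 (\<delta>^k))) \<xi>"
    unfolding \<xi>_def by (rule cholo_on_descended_field[OF \<xi>' Y(1) \<delta>]) (use tube in blast)
  then have "hgerm_at (S \<times> {0}) \<xi>"
    unfolding hgerm_at_def using Y(2) \<delta>
    by (intro exI[of _ "(\<lambda>q. (fst q, snd q / c)) -` (Y \<times> ball 0 (\<delta>^k))"]) (auto intro: cholo_on_open)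
  moreover have "cholo_on ((\<lambda>q. (fst q, snd q / c)) -` (ball 0 \<rho> \<times> ball 0 (\<rho>^k))) \<eta>"
    unfolding \<eta>_def by (rule cholo_on_descended_field[OF \<eta>' open_ball \<rho>]) (use target in simp)
  then have "hgerm_at {0} \<eta>"
    unfolding hgerm_at_def using \<rho>
    by (intro exI[of _ "(\<lambda>q. (fst q, snd q / c)) -` (ball 0 \<rho> \<times> ball 0 (\<rho>^k))"])
       (auto intro: cholo_on_open simp: zero_prod_def)
  moreover have "geq (S \<times> {0}) (tmap (unf_map fl) \<xi>) (wmap (unf_map fl) \<eta>)"
    unfolding geq_def \<xi>_def \<eta>_def
    using descended_field_lift[OF UF \<xi>' \<eta>' k c \<delta> \<rho> Y(1) tube target] Y \<delta> \<rho> c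
    by (intro exI[of _ "Y \<times> ball 0 (min \<delta> (norm c * min \<delta> \<rho> ^ k))"]) (auto simp: open_Times)
  ultimately show "descended_field c k \<rho> \<eta>' \<in> Lift (S \<times> {0}) (unf_map fl)"
    unfolding Lift_def \<eta>_def by blast
  have "pi2_istar \<eta>' X = pi2_istar \<eta> X" if "X \<in> ball 0 \<rho>" for X
    using snd_descended_field_0[OF \<eta>' \<rho> _ k] target that \<rho>
    by (simp add: pi2_istar_def \<eta>_def)
  then show "geq {0} (pi2_istar \<eta>') (pi2_istar (descended_field c k \<rho> \<eta>'))"
    unfolding geq_def \<eta>_def using \<rho> by (intro exI[of _ "ball 0 \<rho>"]) auto
qed

lemma Lift_aug_map_descends:
  fixes fl :: "complex^'n \<Rightarrow> complex \<Rightarrow> complex^'p"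
  assumes S: "finite S" and F: "hgerm_at (S \<times> {0}) (unf_map fl)" and fl0: "\<And>s. s \<in> S \<Longrightarrow> fl s 0 = 0"
    and k: "k \<ge> 1" and c: "c \<noteq> 0" and \<eta>': "\<eta>' \<in> Lift (S \<times> {0}) (aug_map fl (\<lambda>z. c * z^k))"
  shows "\<exists>\<eta>\<in>Lift (S \<times> {0}) (unf_map fl). geq {0} (pi2_istar \<eta>') (pi2_istar \<eta>)"
proof -
  obtain UF where UF: "open UF" "S \<times> {0} \<subseteq> UF" "cholo_on UF (unf_map fl)"
    using F by (rule hgerm_atE)
  obtain T where T: "{0} \<subseteq> T" "cholo_on T \<eta>'"
    using \<eta>' unfolding Lift_def by (auto elim: hgerm_atE)
  obtain \<xi>' where \<xi>': "hgerm_at (S \<times> {0}) \<xi>'"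
    "geq (S \<times> {0}) (tmap (aug_map fl (\<lambda>z. c * z^k)) \<xi>') (wmap (aug_map fl (\<lambda>z. c * z^k)) \<eta>')"
    using \<eta>' unfolding Lift_def by auto
  obtain U where U: "open U" "S \<times> {0} \<subseteq> U" "cholo_on U \<xi>'"
    using \<xi>'(1) by (rule hgerm_atE)
  obtain G where G: "open G" "S \<times> {0} \<subseteq> G" "\<And>p. p \<in> G \<Longrightarrow>
      tmap (aug_map fl (\<lambda>z. c * z^k)) \<xi>' p = wmap (aug_map fl (\<lambda>z. c * z^k)) \<eta>' p"
    using geqE[OF \<xi>'(2)] by metis
  obtain \<epsilon> where \<epsilon>: "\<epsilon> > 0" "ball 0 \<epsilon> \<subseteq> T"
    using T cholo_on_open open_contains_ball by blast
  define \<rho> where "\<rho> = \<epsilon> / 2"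
  have \<rho>: "\<rho> > 0" using \<epsilon> by (simp add: \<rho>_def)
  have target: "(X, \<zeta>) \<in> T" if "norm X < \<rho>" "norm \<zeta> \<le> \<rho>" for X \<zeta>
    using norm_Pair_le[of X \<zeta>] that \<epsilon> by (auto simp: \<rho>_def zero_prod_def[symmetric])
  define W where "W = U \<inter> G \<inter> ((\<lambda>p. fst (unf_map fl p)) -` ball 0 \<rho> \<inter> UF)"
  have "open ((\<lambda>p. fst (unf_map fl p)) -` ball 0 \<rho> \<inter> UF)"
    using continuous_on_open_vimage[OF UF(1)] cholo_on_imp_continuous_on[OF UF(3)]
    by (metis continuous_on_fst open_ball)
  then have "open W"
    unfolding W_def using U(1) G(1) by blast
  moreover have "S \<times> {0} \<subseteq> W"
    using U(2) G(2) UF(2) fl0 \<rho> by (auto simp: W_def unf_map_def)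
  ultimately obtain \<delta> where \<delta>: "\<delta> > 0" "\<And>x \<zeta>. x \<in> (\<Union>s\<in>S. ball s \<delta>) \<Longrightarrow> norm \<zeta> \<le> \<delta> \<Longrightarrow> (x, \<zeta>) \<in> W"
    using finite_tube_subset_open[OF S] by blast
  have "open (\<Union>s\<in>S. ball s \<delta>)" "S \<subseteq> (\<Union>s\<in>S. ball s \<delta>)"
    using \<delta>(1) by auto
  from descended_field_in_Lift[OF UF(3) U(3) T(2) k c \<delta>(1) \<rho> this _ target]
  show ?thesis
    using \<delta>(2) G(3) by (auto simp: W_def unf_map_def)
qed

theorem mainTheorem4:
  fixes S :: "(complex^'n) set" and f :: "complex^'n \<Rightarrow> complex^'p"
    and fl :: "complex^'n \<Rightarrow> complex \<Rightarrow> complex^'p" and \<phi> :: "complex \<Rightarrow> complex"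
  assumes "finite S"
    and "CARD('p) \<le> CARD('n) + 1"
    and "map_germ S f"
    and "is_unfolding S f fl"
    and "stable_germ (S \<times> {0}) (unf_map fl)"
    and "quasihom1 \<phi>"
  shows "germ_set_eq {0} (pi2_istar ` Lift (S \<times> {0}) (aug_map fl \<phi>))
                         (pi2_istar ` Lift (S \<times> {0}) (unf_map fl))"
proof -
  obtain c k where c: "c \<noteq> 0" and k: "k \<ge> 1" and \<phi>: "\<phi> = (\<lambda>z. c * z ^ k)"
    using assms(6) unfolding quasihom1_def by blast
  have F: "hgerm_at (S \<times> {0}) (unf_map fl)"
    using assms(4) by (simp add: is_unfolding_def)
  have "\<phi> holomorphic_on UNIV" "\<phi> 0 = 0"
    using k by (auto simp: \<phi> intro!: holomorphic_intros)
  note pullback = pullback_field_in_Lift[OF this F] pi2_istar_pullback_field[of \<phi>, OF this(2)]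
  note descent = Lift_aug_map_descends[OF assms(1) F unfolding_vanishes_on_source[OF assms(3,4)] k c]
  show ?thesis
    unfolding germ_set_eq_def
  proof (intro conjI ballI)
    fix g assume "g \<in> pi2_istar ` Lift (S \<times> {0}) (aug_map fl \<phi>)"
    then obtain \<eta>' where "\<eta>' \<in> Lift (S \<times> {0}) (aug_map fl (\<lambda>z. c * z ^ k))" "g = pi2_istar \<eta>'"
      by (auto simp: \<phi>)
    with descent show "\<exists>h\<in>pi2_istar ` Lift (S \<times> {0}) (unf_map fl). geq {0} g h"
      by blast
  next
    fix h assume "h \<in> pi2_istar ` Lift (S \<times> {0}) (unf_map fl)"
    then obtain \<eta> where "\<eta> \<in> Lift (S \<times> {0}) (unf_map fl)" "h = pi2_istar \<eta>"
      by blast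
    with pullback geq_refl show "\<exists>g\<in>pi2_istar ` Lift (S \<times> {0}) (aug_map fl \<phi>). geq {0} h g"
      by (metis image_eqI)
  qed
qed

end
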